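(* There exist universal constants $c,C>0$ such that the following holds. Let $n\ge C$ and let $f:\mathbb{R}^n\to[0,\infty)$ be a $C^2$-smooth, log-concave probability density. Let $X$ be a random vector with density $f$, and assume $\mathbb{E}X=0$ and $n\le\mathbb{E}|X|^2\le2n$. Suppose $\delta>0$ is such that $$|\log f(x_1)-\log f(x_2)|\le\delta n$$ for all $x_1,x_2\in\mathbb{R}^n$ with $|x_1|=|x_2|\le10\sqrt n$. Let $r=\sqrt{\mathbb{E}|X|^2}$. Then for all $\varepsilon$ with $C\sqrt\delta\le\varepsilon\le1$, $$\mathrm{Prob}\left\{\left|\frac{|X|}{r}-1\right|>\varepsilon\right\}\le Ce^{-c\varepsilon^2 n}.$$
   Context: A function $f:\mathbb{R}^n\to[0,\infty)$ is log-concave if $f(\lambda x+(1-\lambda)y)\ge f(x)^\lambda f(y)^{1-\lambda}$ for all $x,y$ and $0<\lambda<1$. $|\cdot|$ is the Euclidean norm. *)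

theory Defs
  imports "HOL-Probability.Probability"
begin

text \<open>R^n is represented by the extensional functions on the index set {..<n},
  i.e. the carrier of the product measure below (values outside {..<n} are undefined).\<close>

definition Rn :: "nat \<Rightarrow> (nat \<Rightarrow> real) set" where
  "Rn n = PiE {..<n} (\<lambda>_. UNIV)"

definition lebn :: "nat \<Rightarrow> (nat \<Rightarrow> real) measure" where
  "lebn n = PiM {..<n} (\<lambda>_. lborel)"

definition enorm :: "nat \<Rightarrow> (nat \<Rightarrow> real) \<Rightarrow> real" where
  "enorm n x = sqrt (\<Sum>i<n. (x i)\<^sup>2)"

definition ccomb :: "nat \<Rightarrow> real \<Rightarrow> (nat \<Rightarrow> real) \<Rightarrow> (nat \<Rightarrow> real) \<Rightarrow> (nat \<Rightarrow> real)" where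
  "ccomb n l x y = (\<lambda>i\<in>{..<n}. l * x i + (1 - l) * y i)"

definition log_concave :: "nat \<Rightarrow> ((nat \<Rightarrow> real) \<Rightarrow> real) \<Rightarrow> bool" where
  "log_concave n f \<longleftrightarrow> (\<forall>x\<in>Rn n. f x \<ge> 0) \<and>
     (\<forall>x\<in>Rn n. \<forall>y\<in>Rn n. \<forall>l::real. 0 < l \<and> l < 1 \<longrightarrow>
        f (ccomb n l x y) \<ge> f x powr l * f y powr (1 - l))"

definition has_partial :: "((nat \<Rightarrow> real) \<Rightarrow> real) \<Rightarrow> nat \<Rightarrow> (nat \<Rightarrow> real) \<Rightarrow> real \<Rightarrow> bool" where
  "has_partial g i x d \<longleftrightarrow> ((\<lambda>t. g (x(i := x i + t))) has_real_derivative d) (at 0)"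

definition C2_on_Rn :: "nat \<Rightarrow> ((nat \<Rightarrow> real) \<Rightarrow> real) \<Rightarrow> bool" where
  "C2_on_Rn n g \<longleftrightarrow> (\<exists>D1 D2.
      continuous_on (Rn n) g \<and>
      (\<forall>i<n. \<forall>x\<in>Rn n. has_partial g i x (D1 i x)) \<and>
      (\<forall>i<n. continuous_on (Rn n) (D1 i)) \<and>
      (\<forall>i<n. \<forall>j<n. \<forall>x\<in>Rn n. has_partial (D1 i) j x (D2 i j x)) \<and>
      (\<forall>i<n. \<forall>j<n. continuous_on (Rn n) (D2 i j)))"

definition prob_density :: "nat \<Rightarrow> ((nat \<Rightarrow> real) \<Rightarrow> real) \<Rightarrow> bool" where
  "prob_density n f \<longleftrightarrow> f \<in> borel_measurable (lebn n) \<and> (\<forall>x\<in>Rn n. f x \<ge> 0) \<and>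
     integrable (lebn n) f \<and> integral\<^sup>L (lebn n) f = 1"

end

theory Submission
  imports Defs
begin

text \<open>Along a ray, \<open>f\<close> restricts to a log-concave function \<open>g\<close>, and \<open>s\<^sup>n\<^sup>-\<^sup>1 g(s)\<close> is
  unimodal: moving from its mode \<open>m\<close> by a factor \<open>q\<close> costs at least
  \<open>exp (- (n - 1) (q - 1 - ln q))\<close>. Near-radial symmetry on the ball of radius \<open>10 \<surd>n\<close>
  transfers this, up to \<open>exp (2 \<delta> n)\<close>, from one ray to \<open>f\<close> itself; comparing \<open>f\<close> with its
  dilation \<open>x \<mapsto> f (q x)\<close>, whose integral is \<open>q\<^sup>-\<^sup>n\<close>, then bounds the mass of \<open>|x| < q m\<close>
  (\<open>q < 1\<close>) and \<open>q m < |x|\<close> (\<open>q > 1\<close>). Outside the ball, log-concavity along rays gives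
  \<open>f (2 x) \<le> 2\<^sup>-\<^sup>n exp (- (n - 1) / 4) f x\<close>. Summing these bounds over layers of width
  \<open>v \<approx> \<surd>((\<delta> n + 1) / n)\<close> shows that the first and second moments of \<open>|X|\<close> pin down \<open>m\<close>
  up to a factor \<open>1 \<plusminus> \<epsilon> / 10\<close>, so \<open>m\<close> is close to \<open>r\<close>, and the deviation bounds
  follow with \<open>q = 1 \<plusminus> \<epsilon> / 2\<close>.\<close>

section \<open>Dilations of \<open>\<real>\<^sup>n\<close>\<close>

definition dilate :: "nat \<Rightarrow> real \<Rightarrow> (nat \<Rightarrow> real) \<Rightarrow> (nat \<Rightarrow> real)" where
  "dilate n c x = (\<lambda>i\<in>{..<n}. c * x i)"

lemma space_lebn: "space (lebn n) = Rn n"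
  by (simp add: lebn_def Rn_def space_PiM)

lemma AE_lebn_Rn: "AE x in lebn n. x \<in> Rn n"
  by (rule AE_I2) (simp add: space_lebn)

lemma dilate_in_Rn: "dilate n c x \<in> Rn n"
  by (simp add: dilate_def Rn_def)

lemma dilate_measurable [measurable]: "dilate n c \<in> measurable (lebn n) (lebn n)"
  unfolding dilate_def lebn_def
  by (intro measurable_restrict) (auto intro: measurable_component_singleton)

lemma dilate_1: "x \<in> Rn n \<Longrightarrow> dilate n 1 x = x"
  by (auto simp: dilate_def Rn_def fun_eq_iff PiE_iff extensional_def)

lemma ccomb_dilate: "ccomb n l (dilate n a x) (dilate n b x) = dilate n (l * a + (1 - l) * b) x"
  by (auto simp: dilate_def ccomb_def fun_eq_iff algebra_simps)

lemma continuous_on_dilate: "continuous_on UNIV (\<lambda>s. dilate n s x)"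
  unfolding dilate_def
proof (intro continuous_on_coordinatewise_then_product)
  fix i
  show "continuous_on UNIV (\<lambda>s. (\<lambda>i\<in>{..<n}. s * x i) i)"
    by (cases "i < n") (auto intro!: continuous_intros)
qed

lemma enorm_nonneg: "0 \<le> enorm n x"
  by (simp add: enorm_def sum_nonneg)

lemma enorm_dilate: "enorm n (dilate n c x) = \<bar>c\<bar> * enorm n x"
proof -
  have "(\<Sum>i<n. (dilate n c x i)\<^sup>2) = c\<^sup>2 * (\<Sum>i<n. (x i)\<^sup>2)"
    by (simp add: dilate_def sum_distrib_left power_mult_distrib)
  thus ?thesis by (simp add: enorm_def real_sqrt_mult)
qed

lemma enorm_measurable [measurable]: "enorm n \<in> borel_measurable (lebn n)"
  unfolding enorm_def lebn_def by measurable

lemma product_sigma_finite_lborel: "product_sigma_finite (\<lambda>_::nat. lborel :: real measure)"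
  by (simp add: product_sigma_finite_def lborel.sigma_finite_measure_axioms)

lemma emeasure_lborel_vimage_mult:
  assumes "c \<noteq> 0" "A \<in> sets borel"
  shows "emeasure lborel ((\<lambda>t::real. c * t) -` A) = ennreal (1 / \<bar>c\<bar>) * emeasure lborel A"
proof -
  have "emeasure lborel ((\<lambda>t::real. c * t) -` A) = emeasure (distr lborel borel ((*) c)) A"
    using assms by (simp add: emeasure_distr)
  also have "\<dots> = emeasure (density lborel (\<lambda>_. inverse \<bar>c\<bar>)) A"
    using assms by (simp add: lborel_distr_mult)
  also have "\<dots> = ennreal (1 / \<bar>c\<bar>) * emeasure lborel A"
    using assms by (simp add: emeasure_density nn_integral_cmult_indicator inverse_eq_divide)
  finally show ?thesis .
qed

lemma density_distr_dilate_lebn: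
  assumes c: "0 < c"
  shows "density (distr (lebn n) (lebn n) (dilate n c)) (\<lambda>_. ennreal (c ^ n)) = lebn n"
  unfolding lebn_def
proof (rule product_sigma_finite.PiM_eqI[OF product_sigma_finite_lborel])
  let ?L = "Pi\<^sub>M {..<n} (\<lambda>_. lborel :: real measure)"
  fix A assume A: "\<And>i. i \<in> {..<n} \<Longrightarrow> A i \<in> sets (lborel :: real measure)"
  have AP: "Pi\<^sub>E {..<n} A \<in> sets ?L"
    using A by (intro sets_PiM_I_finite) auto
  have preimage: "dilate n c -` Pi\<^sub>E {..<n} A \<inter> space ?L = Pi\<^sub>E {..<n} (\<lambda>i. (\<lambda>t. c * t) -` A i)"
    by (auto simp: dilate_def space_PiM PiE_iff)
  have "emeasure (density (distr ?L ?L (dilate n c)) (\<lambda>_. ennreal (c ^ n))) (Pi\<^sub>E {..<n} A)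
      = ennreal (c ^ n) * emeasure (distr ?L ?L (dilate n c)) (Pi\<^sub>E {..<n} A)"
    using AP by (simp add: emeasure_density nn_integral_cmult_indicator)
  also have "\<dots> = ennreal (c ^ n) * emeasure ?L (Pi\<^sub>E {..<n} (\<lambda>i. (\<lambda>t. c * t) -` A i))"
    using AP dilate_measurable[of n c] by (simp add: emeasure_distr preimage lebn_def)
  also have "\<dots> = ennreal (c ^ n) * (\<Prod>i<n. ennreal (1 / c) * emeasure lborel (A i))"
    using A c
    by (subst product_sigma_finite.emeasure_PiM[OF product_sigma_finite_lborel])
       (auto intro!: prod.cong measurable_sets_borel[of "(*) c" borel] simp: emeasure_lborel_vimage_mult)
  also have "\<dots> = (\<Prod>i<n. emeasure lborel (A i))"
    using c by (simp add: prod.distrib ennreal_power[symmetric] mult.assoc[symmetric]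
                          ennreal_mult[symmetric] power_mult_distrib[symmetric])
  finally show "emeasure (density (distr ?L ?L (dilate n c)) (\<lambda>_. ennreal (c ^ n))) (Pi\<^sub>E {..<n} A)
     = (\<Prod>i<n. emeasure lborel (A i))" .
qed (simp_all add: lebn_def)

lemma nn_integral_lebn_dilate:
  assumes c: "0 < c" and u [measurable]: "u \<in> borel_measurable (lebn n)"
  shows "(\<integral>\<^sup>+x. u x \<partial>lebn n) = ennreal (c ^ n) * (\<integral>\<^sup>+x. u (dilate n c x) \<partial>lebn n)"
proof -
  have "(\<integral>\<^sup>+x. u x \<partial>lebn n)
      = (\<integral>\<^sup>+x. u x \<partial>density (distr (lebn n) (lebn n) (dilate n c)) (\<lambda>_. ennreal (c ^ n)))"
    by (simp add: density_distr_dilate_lebn[OF c])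
  also have "\<dots> = (\<integral>\<^sup>+x. ennreal (c ^ n) * u (dilate n c x) \<partial>lebn n)"
    by (subst nn_integral_density) (auto simp: nn_integral_distr)
  also have "\<dots> = ennreal (c ^ n) * (\<integral>\<^sup>+x. u (dilate n c x) \<partial>lebn n)"
    by (subst nn_integral_cmult) simp_all
  finally show ?thesis .
qed

lemma integral_le_by_dilation:
  assumes c: "0 < c" and u: "integrable (lebn n) u" "\<And>x. x \<in> Rn n \<Longrightarrow> 0 \<le> u x"
    and w: "integrable (lebn n) w" and le: "AE x in lebn n. c ^ n * u (dilate n c x) \<le> w x"
  shows "integral\<^sup>L (lebn n) u \<le> integral\<^sup>L (lebn n) w"
proof -
  have [measurable]: "u \<in> borel_measurable (lebn n)" "w \<in> borel_measurable (lebn n)"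
    using u w by auto
  have u_dilate_nonneg: "0 \<le> c ^ n * u (dilate n c x)" for x
    using c u(2)[OF dilate_in_Rn] by simp
  have "ennreal (integral\<^sup>L (lebn n) u) = (\<integral>\<^sup>+x. ennreal (u x) \<partial>lebn n)"
    using u by (intro nn_integral_eq_integral[symmetric]) (auto intro: AE_mp[OF AE_lebn_Rn])
  also have "\<dots> = (\<integral>\<^sup>+x. ennreal (c ^ n) * ennreal (u (dilate n c x)) \<partial>lebn n)"
    by (simp add: nn_integral_lebn_dilate[OF c, of "\<lambda>x. ennreal (u x)"] nn_integral_cmult)
  also have "\<dots> = (\<integral>\<^sup>+x. ennreal (c ^ n * u (dilate n c x)) \<partial>lebn n)"
    using c u(2) dilate_in_Rn by (simp add: ennreal_mult)
  also have "\<dots> \<le> (\<integral>\<^sup>+x. ennreal (w x) \<partial>lebn n)"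
    using le by (auto intro!: nn_integral_mono_AE ennreal_leI elim!: AE_mp)
  also have "\<dots> = ennreal (integral\<^sup>L (lebn n) w)"
    using w le u_dilate_nonneg by (intro nn_integral_eq_integral) (auto elim!: AE_mp intro: order.trans)
  finally have "ennreal (integral\<^sup>L (lebn n) u) \<le> ennreal (integral\<^sup>L (lebn n) w)" .
  moreover have "0 \<le> integral\<^sup>L (lebn n) w"
    using le u_dilate_nonneg by (intro integral_nonneg_AE) (auto elim!: AE_mp intro: order.trans)
  ultimately show ?thesis
    by (auto simp: ennreal_le_iff2)
qed

lemma AE_lebn_enorm_nonzero:
  assumes "1 \<le> n"
  shows "AE x in lebn n. enorm n x \<noteq> 0"
proof (rule AE_I')
  have zero: "{x \<in> space (lebn n). enorm n x = 0} = Pi\<^sub>E {..<n} (\<lambda>_. {0})"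
  proof (intro equalityI subsetI)
    fix x assume "x \<in> {x \<in> space (lebn n). enorm n x = 0}"
    hence x: "x \<in> Rn n" "(\<Sum>i<n. (x i)\<^sup>2) = 0" by (auto simp: space_lebn enorm_def)
    hence "\<forall>i\<in>{..<n}. (x i)\<^sup>2 = 0" by (subst (asm) sum_nonneg_eq_0_iff) auto
    thus "x \<in> Pi\<^sub>E {..<n} (\<lambda>_. {0})"
      using x by (auto simp: Rn_def PiE_iff extensional_def fun_eq_iff)
  qed (auto simp: space_lebn Rn_def PiE_iff enorm_def)
  have "emeasure (lebn n) (Pi\<^sub>E {..<n} (\<lambda>_. {0})) = 0"
    unfolding lebn_def using assms
    by (subst product_sigma_finite.emeasure_PiM[OF product_sigma_finite_lborel]) (auto simp: prod_zero_iff)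
  moreover have "Pi\<^sub>E {..<n} (\<lambda>_. {0::real}) \<in> sets (lebn n)"
    unfolding lebn_def by (intro sets_PiM_I_finite) auto
  ultimately show "{x \<in> space (lebn n). enorm n x = 0} \<in> null_sets (lebn n)"
    by (simp add: zero null_sets_def)
qed auto

section \<open>Log-concave functions on the line\<close>

definition log_concave_fun :: "(real \<Rightarrow> real) \<Rightarrow> bool" where
  "log_concave_fun g \<longleftrightarrow> (\<forall>s. 0 \<le> g s) \<and>
     (\<forall>a b l. 0 < l \<and> l < 1 \<longrightarrow> g a powr l * g b powr (1 - l) \<le> g (l * a + (1 - l) * b))"

lemma log_concave_fun_nonneg: "log_concave_fun g \<Longrightarrow> 0 \<le> g s"
  by (simp add: log_concave_fun_def)

lemma log_concave_restrict_ray: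
  assumes "log_concave n f"
  shows "log_concave_fun (\<lambda>s. f (dilate n s x))"
  using assms dilate_in_Rn[of n] unfolding log_concave_fun_def log_concave_def
  by (metis ccomb_dilate)

lemma log_concave_fun_mult_exp:
  assumes g: "log_concave_fun g"
  shows "log_concave_fun (\<lambda>s. exp (c * s) * g s)"
  unfolding log_concave_fun_def
proof (intro conjI allI impI)
  fix s show "0 \<le> exp (c * s) * g s" using log_concave_fun_nonneg[OF g] by simp
next
  fix a b l :: real assume l: "0 < l \<and> l < 1"
  have "(exp (c * a) * g a) powr l * (exp (c * b) * g b) powr (1 - l)
      = exp (c * (l * a + (1 - l) * b)) * (g a powr l * g b powr (1 - l))"
    by (simp add: powr_mult exp_powr_real log_concave_fun_nonneg[OF g] exp_add[symmetric] algebra_simps)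
  also have "\<dots> \<le> exp (c * (l * a + (1 - l) * b)) * g (l * a + (1 - l) * b)"
    using g l by (simp add: log_concave_fun_def)
  finally show "(exp (c * a) * g a) powr l * (exp (c * b) * g b) powr (1 - l)
      \<le> exp (c * (l * a + (1 - l) * b)) * g (l * a + (1 - l) * b)" .
qed

lemma log_concave_fun_le_beyond:
  assumes g: "log_concave_fun g" and between: "a < t \<and> t < b \<or> b < t \<and> t < a"
    and le: "g t \<le> g a" and pos: "0 < g a"
  shows "g b \<le> g t"
proof (rule ccontr)
  assume "\<not> g b \<le> g t"
  hence less: "g t < g b" by simp
  define l where "l = (t - b) / (a - b)"
  have l: "0 < l" "l < 1" and t_eq: "t = l * a + (1 - l) * b"
    using between by (auto simp: l_def field_simps)
  have gt: "0 \<le> g t" using log_concave_fun_nonneg[OF g] .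
  have "g a powr l * g t powr (1 - l) < g a powr l * g b powr (1 - l)"
    using l pos gt less by (intro mult_strict_left_mono powr_less_mono2) auto
  also have "\<dots> \<le> g t"
    using g l t_eq unfolding log_concave_fun_def by metis
  also have "\<dots> = g t powr l * g t powr (1 - l)"
    using gt by (simp add: powr_add[symmetric] powr_one)
  also have "\<dots> \<le> g a powr l * g t powr (1 - l)"
    using l gt le by (intro mult_right_mono powr_mono2) auto
  finally show False by simp
qed

definition log_excess :: "real \<Rightarrow> real" where
  "log_excess q = q - 1 - ln q"

lemma power_le_exp_tangent:
  fixes k :: nat
  assumes a: "0 < a" and t: "0 < t"
  shows "a ^ k \<le> t ^ k * exp (k / t * a - k)"
proof -
  have "a / t \<le> exp (a / t - 1)" using exp_ge_add_one_self[of "a / t - 1"] by simp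
  hence "(a / t) ^ k \<le> exp (a / t - 1) ^ k" using a t by (intro power_mono) auto
  thus ?thesis using t by (simp add: power_divide exp_of_nat_mult[symmetric] field_simps)
qed

text \<open>Tilting \<open>g\<close> by \<open>exp (k s / t)\<close>, which up to a constant factor dominates \<open>s\<^sup>k\<close> with
  equality at \<open>s = t\<close>, reduces this to \<open>log_concave_fun_le_beyond\<close>.\<close>

lemma power_mult_log_concave_decay:
  fixes k :: nat
  assumes g: "log_concave_fun g" and a: "0 < a" "0 < g a" and t: "0 < t" "a \<noteq> t"
    and q: "0 < q" and away: "0 \<le> (q - 1) * (t - a)"
    and le: "t ^ k * g t \<le> a ^ k * g a"
  shows "(q * t) ^ k * g (q * t) \<le> exp (- real k * log_excess q) * (t ^ k * g t)"
proof (cases "q = 1")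
  case True
  thus ?thesis by (simp add: log_excess_def)
next
  case False
  define h where "h s = exp (k / t * s) * g s" for s
  have between: "a < t \<and> t < q * t \<or> q * t < t \<and> t < a"
    using away False t by (auto simp: zero_le_mult_iff)
  have "exp k * (t ^ k * g t) \<le> exp k * (t ^ k * exp (k / t * a - k) * g a)"
    using le a power_le_exp_tangent[OF a(1) t(1), of k]
    by (intro mult_left_mono order.trans[OF le] mult_right_mono) auto
  hence "t ^ k * (exp k * g t) \<le> t ^ k * (exp (k / t * a) * g a)"
    by (simp add: exp_diff field_simps)
  hence h_le: "h t \<le> h a"
    using t by (simp add: h_def)
  have "log_concave_fun h"
    unfolding h_def by (rule log_concave_fun_mult_exp[OF g])
  hence "h (q * t) \<le> h t"
    by (rule log_concave_fun_le_beyond[OF _ between h_le]) (simp add: h_def a)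
  hence "exp (k * q) * g (q * t) \<le> exp k * g t"
    using t by (simp add: h_def)
  hence "g (q * t) \<le> exp (- real k * (q - 1)) * g t"
    by (simp add: exp_diff right_diff_distrib field_simps)
  hence "(q * t) ^ k * g (q * t) \<le> t ^ k * ((q ^ k * exp (- real k * (q - 1))) * g t)"
    using q t by (simp add: power_mult_distrib mult.assoc mult_left_mono)
  also have "q ^ k * exp (- real k * (q - 1)) = exp (- real k * log_excess q)"
  proof -
    have "q ^ k = exp (real k * ln q)" using q by (simp add: exp_of_nat_mult)
    thus ?thesis by (simp add: log_excess_def exp_add[symmetric] algebra_simps)
  qed
  finally show ?thesis by (simp add: algebra_simps)
qed

lemma log_excess_nonneg: "0 < q \<Longrightarrow> 0 \<le> log_excess q"
  using ln_le_minus_one[of q] by (simp add: log_excess_def)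

lemma log_excess_ge_below:
  assumes "0 < q" "q \<le> 1"
  shows "(1 - q)\<^sup>2 / 2 \<le> log_excess q"
proof -
  define p where "p x = - (x - 1 - ln x - (1 - x)\<^sup>2 / 2)" for x :: real
  have "p q \<le> p 1"
  proof (rule DERIV_nonneg_imp_nondecreasing[OF assms(2)])
    fix x assume x: "q \<le> x" "x \<le> 1"
    hence x0: "0 < x" using assms by auto
    have "(p has_real_derivative ((1 - x)\<^sup>2 / x)) (at x)"
      unfolding p_def using x0
      by (auto intro!: derivative_eq_intros simp: field_simps power2_eq_square)
    thus "\<exists>y. (p has_real_derivative y) (at x) \<and> 0 \<le> y" using x0 by auto
  qed
  thus ?thesis by (simp add: p_def log_excess_def)
qed

lemma log_excess_ge_above:
  assumes "1 \<le> q"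
  shows "(q - 1)\<^sup>2 / (2 * q) \<le> log_excess q"
proof -
  define p where "p x = x - 1 - ln x - (x - 1)\<^sup>2 / (2 * x)" for x :: real
  have "p 1 \<le> p q"
  proof (rule DERIV_nonneg_imp_nondecreasing[OF assms])
    fix x assume x: "1 \<le> x" "x \<le> q"
    have "(p has_real_derivative ((x - 1)\<^sup>2 / (2 * x\<^sup>2))) (at x)"
      unfolding p_def using x
      by (auto intro!: derivative_eq_intros simp: field_simps power2_eq_square)
    thus "\<exists>y. (p has_real_derivative y) (at x) \<and> 0 \<le> y" by auto
  qed
  thus ?thesis by (simp add: p_def log_excess_def)
qed

lemma quarter_le_log_excess_2: "1 / 4 \<le> log_excess 2"
  using log_excess_ge_above[of 2] by simp

section \<open>Discrete layer sums\<close>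

lemma sum_exp_neg_le_1: "(\<Sum>j=1..J. exp (- real j)) \<le> 1"
proof -
  have e: "exp (-1::real) \<le> 1/2"
    using exp_ge_add_one_self[of 1] by (simp add: exp_minus field_simps)
  have "(\<Sum>j=1..J. exp (- real j)) = (\<Sum>j=1..J. exp (-1) ^ j)"
    by (intro sum.cong) (auto simp: exp_of_nat_mult[symmetric])
  also have "\<dots> = exp (-1) * (\<Sum>i<J. exp (-1) ^ i)"
    by (induction J) (auto simp: algebra_simps)
  also have "\<dots> \<le> (1/2) * (1 / (1 - exp (-1)))"
    using e by (intro mult_mono less_imp_le[OF geometric_sum_less] sum_nonneg) auto
  also have "\<dots> \<le> 1"
    using e by (simp add: field_simps)
  finally show ?thesis .
qed

lemma mono_le_layer_sum:
  fixes \<phi> :: "real \<Rightarrow> real" and s :: "nat \<Rightarrow> real"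
  assumes \<phi>: "mono_on S \<phi>" and s: "incseq s" "range s \<subseteq> S" and t: "t \<in> S" "t \<le> s (Suc J)"
  shows "\<phi> t \<le> \<phi> (s 1) + (\<Sum>j=1..J. (\<phi> (s (Suc j)) - \<phi> (s j)) * of_bool (s j < t))"
  using t(2)
proof (induction J)
  case 0
  thus ?case using \<phi> s t by (auto intro: mono_onD)
next
  case (Suc J)
  have step_nonneg: "0 \<le> \<phi> (s (Suc j)) - \<phi> (s j)" for j
    using \<phi> s by (auto intro: mono_onD incseq_SucD)
  show ?case
  proof (cases "t \<le> s (Suc J)")
    case True
    thus ?thesis using Suc.IH step_nonneg[of "Suc J"] by simp
  next
    case False
    have "s j < t" if "j \<le> Suc J" for j
      using False incseqD[OF s(1) that] by linarith
    hence "(\<Sum>j=1..Suc J. (\<phi> (s (Suc j)) - \<phi> (s j)) * of_bool (s j < t))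
        = (\<Sum>j=1..Suc J. \<phi> (s (Suc j)) - \<phi> (s j))"
      by (intro sum.cong) auto
    also have "\<dots> = \<phi> (s (Suc (Suc J))) - \<phi> (s 1)"
      by (rule sum_Suc_diff) simp
    moreover have "\<phi> t \<le> \<phi> (s (Suc (Suc J)))"
      using Suc.prems \<phi> s t by (auto intro: mono_onD)
    ultimately show ?thesis by simp
  qed
qed

lemma lower_layer_sum:
  fixes m v t :: real
  assumes "0 < m" "0 < v" "0 \<le> t"
  shows "m - t \<le> m * v + (\<Sum>j=1..nat \<lceil>1/v\<rceil>. m * v * of_bool (t < (1 - real j * v) * m))"
proof -
  define J where "J = nat \<lceil>1/v\<rceil>"
  have "1 / v \<le> real J" unfolding J_def by linarith
  hence "1 \<le> v * real J" using assms by (simp add: field_simps)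
  hence "1 - real (Suc J) * v \<le> 0" using assms by (simp add: algebra_simps)
  hence "m * (1 - real (Suc J) * v) \<le> 0" using assms by (simp add: mult_nonneg_nonpos)
  hence "- t \<le> - (m * (1 - real (Suc J) * v))" using assms by linarith
  hence "m + - t \<le> m + - (m * (1 - real 1 * v))
      + (\<Sum>j=1..J. ((m + - (m * (1 - real (Suc j) * v))) - (m + - (m * (1 - real j * v))))
                  * of_bool (- (m * (1 - real j * v)) < - t))"
    using assms
    by (intro mono_le_layer_sum[where \<phi> = "\<lambda>x. m + x" and s = "\<lambda>j. - (m * (1 - real j * v))" and S = UNIV])
       (auto simp: mono_on_def incseq_def algebra_simps intro!: mult_left_mono)
  thus ?thesis by (simp add: J_def algebra_simps)
qed

lemma upper_layer_sum:
  fixes m v t R :: real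
  assumes m: "0 < m" and v: "0 < v" and t: "0 \<le> t"
  shows "t\<^sup>2 \<le> ((1 + v) * m)\<^sup>2 + (\<Sum>j=1..nat \<lceil>R / (m * v)\<rceil>.
           (((1 + real (Suc j) * v) * m)\<^sup>2 - ((1 + real j * v) * m)\<^sup>2) * of_bool ((1 + real j * v) * m < t))
         + of_bool (R \<le> t) * t\<^sup>2"
proof (cases "R \<le> t")
  case True
  have "0 \<le> (((1 + real (Suc j) * v) * m)\<^sup>2 - ((1 + real j * v) * m)\<^sup>2) * of_bool ((1 + real j * v) * m < t)" for j
    using m v by (auto intro!: power_mono mult_right_mono)
  hence "0 \<le> (\<Sum>j=1..nat \<lceil>R / (m * v)\<rceil>.
           (((1 + real (Suc j) * v) * m)\<^sup>2 - ((1 + real j * v) * m)\<^sup>2) * of_bool ((1 + real j * v) * m < t))"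
    by (intro sum_nonneg)
  thus ?thesis using True by simp
next
  case False
  define J where "J = nat \<lceil>R / (m * v)\<rceil>"
  have "R / (m * v) \<le> real J" unfolding J_def by linarith
  hence "R \<le> m * v * real J" using m v by (simp add: field_simps)
  moreover have "(1 + real (Suc J) * v) * m = m + m * v + m * v * real J"
    by (simp add: algebra_simps)
  ultimately have "t \<le> (1 + real (Suc J) * v) * m" using False m t mult_pos_pos[OF m v] by linarith
  hence "t\<^sup>2 \<le> ((1 + real 1 * v) * m)\<^sup>2
      + (\<Sum>j=1..J. (((1 + real (Suc j) * v) * m)\<^sup>2 - ((1 + real j * v) * m)\<^sup>2) * of_bool ((1 + real j * v) * m < t))"
    using m v t
    by (intro mono_le_layer_sum[where \<phi> = "\<lambda>x. x\<^sup>2" and s = "\<lambda>j. (1 + real j * v) * m" and S = "{0..}"])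
       (auto simp: mono_on_def incseq_def intro!: power_mono mult_right_mono)
  thus ?thesis using False by (simp add: J_def)
qed

lemma lower_layer_weight_le:
  fixes D k v :: real and j :: nat
  assumes kv: "16 * (2 * D + 1) \<le> k * v\<^sup>2" and D: "0 \<le> D" and k: "0 \<le> k" and v: "0 < v"
    and j: "1 \<le> j" "real j * v < 1"
  shows "(1 - real j * v) * exp (2 * D - k * log_excess (1 - real j * v)) \<le> exp (- real j)"
proof -
  have "k * ((real j * v)\<^sup>2 / 2) \<le> k * log_excess (1 - real j * v)"
    using log_excess_ge_below[of "1 - real j * v"] j v k by (intro mult_left_mono) auto
  moreover have "(real j)\<^sup>2 * (8 * (2 * D + 1)) \<le> k * ((real j * v)\<^sup>2 / 2)"
    using mult_right_mono[OF kv, of "(real j)\<^sup>2"] by (simp add: power_mult_distrib algebra_simps)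
  moreover have "2 * D + real j \<le> (real j)\<^sup>2 * (8 * (2 * D + 1))"
  proof -
    have j2: "real j \<le> (real j)\<^sup>2" using j by (simp add: power2_eq_square)
    have "1 * (16 * D) \<le> (real j)\<^sup>2 * (16 * D)" using j j2 D by (intro mult_right_mono) auto
    moreover have "(real j)\<^sup>2 * (8 * (2 * D + 1)) = 8 * (real j)\<^sup>2 + (real j)\<^sup>2 * (16 * D)"
      by (simp add: algebra_simps)
    ultimately show ?thesis using j2 D by linarith
  qed
  ultimately have "2 * D - k * log_excess (1 - real j * v) \<le> - real j" by linarith
  moreover have "0 \<le> 1 - real j * v" "1 - real j * v \<le> 1" using j v by auto
  ultimately show ?thesis
    by (metis exp_le_cancel_iff exp_ge_zero mult_left_le_one_le order.trans)
qed

lemma upper_layer_rate_ge: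
  fixes D k v :: real and j :: nat
  assumes kv: "16 * (2 * D + 1) \<le> k * v\<^sup>2" and D: "0 \<le> D" and k: "0 \<le> k" and v: "0 < v" "v \<le> 1"
    and j: "1 \<le> j"
  shows "4 * real j * (2 * D + 1) \<le> k * log_excess (1 + real j * v)"
proof -
  define w where "w = real j * v"
  have w: "0 < w" using v j by (simp add: w_def)
  have h: "w\<^sup>2 / (2 * (1 + w)) \<le> log_excess (1 + w)" using log_excess_ge_above[of "1 + w"] w by simp
  show ?thesis
    unfolding w_def[symmetric]
  proof (cases "w \<le> 1")
    case True
    have "w\<^sup>2 / 4 \<le> w\<^sup>2 / (2 * (1 + w))" using True w by (intro divide_left_mono) auto
    hence "w\<^sup>2 / 4 \<le> log_excess (1 + w)" using h by linarith
    hence "k * (w\<^sup>2 / 4) \<le> k * log_excess (1 + w)" using k by (intro mult_left_mono)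
    moreover have "(real j)\<^sup>2 * (4 * (2 * D + 1)) \<le> k * (w\<^sup>2 / 4)"
      using mult_right_mono[OF kv, of "(real j)\<^sup>2"] by (simp add: w_def power_mult_distrib algebra_simps)
    moreover have "real j * (4 * (2 * D + 1)) \<le> (real j)\<^sup>2 * (4 * (2 * D + 1))"
      using j D by (intro mult_right_mono) (auto simp: power2_eq_square)
    ultimately show "4 * real j * (2 * D + 1) \<le> k * log_excess (1 + w)" by linarith
  next
    case False
    have "w / 4 \<le> w\<^sup>2 / (2 * (1 + w))" using False w by (simp add: field_simps power2_eq_square)
    hence "w / 4 \<le> log_excess (1 + w)" using h by linarith
    hence "k * (w / 4) \<le> k * log_excess (1 + w)" using k by (intro mult_left_mono)
    moreover have "k * v\<^sup>2 \<le> k * v"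
      using v k by (intro mult_left_mono) (auto simp: power2_eq_square mult_left_le)
    hence "real j * (16 * (2 * D + 1)) \<le> real j * (k * v)" using kv by (intro mult_left_mono) auto
    hence "4 * real j * (2 * D + 1) \<le> k * (w / 4)" by (simp add: w_def algebra_simps)
    ultimately show "4 * real j * (2 * D + 1) \<le> k * log_excess (1 + w)" by linarith
  qed
qed

lemma upper_layer_weight_le:
  fixes D k v :: real and j :: nat
  assumes kv: "16 * (2 * D + 1) \<le> k * v\<^sup>2" and D: "0 \<le> D" and k: "0 \<le> k" and v: "0 < v" "v \<le> 1"
    and j: "1 \<le> j"
  shows "(1 + real j * v)\<^sup>2 * exp (2 * D - k * log_excess (1 + real j * v)) \<le> exp (- real j)"
proof -
  have "(1 + real j * v)\<^sup>2 \<le> exp (real j * v) ^ 2"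
    using v by (intro power_mono) (auto simp: add.commute)
  also have "\<dots> \<le> exp (2 * real j)"
    using v j by (simp add: exp_double[symmetric] mult_left_le)
  finally have "(1 + real j * v)\<^sup>2 * exp (2 * D - k * log_excess (1 + real j * v))
      \<le> exp (2 * real j) * exp (2 * D - k * log_excess (1 + real j * v))"
    by (intro mult_right_mono) auto
  also have "\<dots> \<le> exp (- real j)"
  proof -
    have "1 * D \<le> real j * D" using j D by (intro mult_right_mono) auto
    hence "2 * real j + (2 * D - k * log_excess (1 + real j * v)) \<le> - real j"
      using upper_layer_rate_ge[OF kv D k v j] D by (simp add: algebra_simps)
    thus ?thesis by (simp add: exp_add[symmetric])
  qed
  finally show ?thesis .
qed

section \<open>Log-concave densities that are nearly radial on a ball\<close>

definition basis0 :: "nat \<Rightarrow> nat \<Rightarrow> real" where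
  "basis0 n = (\<lambda>i\<in>{..<n}. if i = 0 then 1 else 0)"

lemma enorm_basis0: "1 \<le> n \<Longrightarrow> enorm n (basis0 n) = 1"
proof -
  assume "1 \<le> n"
  have "(\<Sum>i<n. (basis0 n i)\<^sup>2) = (\<Sum>i<n. if i = 0 then 1 else 0)"
    by (intro sum.cong) (auto simp: basis0_def)
  thus ?thesis using \<open>1 \<le> n\<close> by (simp add: enorm_def)
qed

text \<open>\<open>D\<close> plays the role of \<open>\<delta> n\<close> and \<open>R\<close> that of \<open>10 \<surd>n\<close>; only the final estimates
  need \<open>R = 10 \<surd>n\<close>.\<close>

locale near_radial_log_concave =
  fixes n :: nat and f :: "(nat \<Rightarrow> real) \<Rightarrow> real" and D R :: real
  assumes n_ge_2: "2 \<le> n"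
    and log_concave: "log_concave n f"
    and f_measurable [measurable]: "f \<in> borel_measurable (lebn n)"
    and integrable_f: "integrable (lebn n) f"
    and integral_f: "integral\<^sup>L (lebn n) f = 1"
    and continuous_f: "continuous_on (Rn n) f"
    and R_pos: "0 < R"
    and near_radial: "\<And>x y. x \<in> Rn n \<Longrightarrow> y \<in> Rn n \<Longrightarrow> enorm n x = enorm n y \<Longrightarrow> enorm n x \<le> R \<Longrightarrow>
           0 < f x \<and> 0 < f y \<and> \<bar>ln (f x) - ln (f y)\<bar> \<le> D"
begin

definition "k = n - 1"

definition "profile s = f (dilate n s (basis0 n))"

text \<open>Up to the surface area of the sphere, the density of \<open>|X|\<close> if \<open>f\<close> were radial.\<close>

definition "radial_density s = s ^ k * profile s"

lemma n_Suc_k: "n = Suc k"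
  using n_ge_2 by (simp add: k_def)

lemma real_k: "real k = real n - 1"
  using n_ge_2 by (simp add: k_def)

lemma f_nonneg: "x \<in> Rn n \<Longrightarrow> 0 \<le> f x"
  using log_concave by (simp add: log_concave_def)

lemma D_nonneg: "0 \<le> D"
  using near_radial[OF dilate_in_Rn dilate_in_Rn, of 0 x 0 x] R_pos by (simp add: enorm_dilate)

lemma f_pos: "x \<in> Rn n \<Longrightarrow> enorm n x \<le> R \<Longrightarrow> 0 < f x"
  using near_radial by blast

lemma enorm_dilate_basis0: "0 \<le> s \<Longrightarrow> enorm n (dilate n s (basis0 n)) = s"
  using enorm_basis0[of n] n_ge_2 by (simp add: enorm_dilate)

lemma profile_pos: "0 \<le> s \<Longrightarrow> s \<le> R \<Longrightarrow> 0 < profile s"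
  unfolding profile_def using f_pos dilate_in_Rn enorm_dilate_basis0 by simp

lemma log_concave_profile: "log_concave_fun profile"
  unfolding profile_def by (rule log_concave_restrict_ray[OF log_concave])

lemma
  assumes x: "x \<in> Rn n" "enorm n x \<le> R"
  shows f_le_profile: "f x \<le> exp D * profile (enorm n x)"
    and profile_le_f: "profile (enorm n x) \<le> exp D * f x"
proof -
  let ?y = "dilate n (enorm n x) (basis0 n)"
  have "enorm n x = enorm n ?y" using enorm_dilate_basis0 enorm_nonneg by simp
  hence "0 < f x" "0 < f ?y" "\<bar>ln (f x) - ln (f ?y)\<bar> \<le> D"
    using near_radial[OF x(1) dilate_in_Rn _ x(2)] by auto
  hence "ln (f x) \<le> D + ln (f ?y)" "ln (f ?y) \<le> D + ln (f x)" by auto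
  hence "exp (ln (f x)) \<le> exp (D + ln (f ?y))" "exp (ln (f ?y)) \<le> exp (D + ln (f x))"
    by (simp_all only: exp_le_cancel_iff)
  thus "f x \<le> exp D * profile (enorm n x)" "profile (enorm n x) \<le> exp D * f x"
    using \<open>0 < f x\<close> \<open>0 < f ?y\<close> by (simp_all add: profile_def exp_add)
qed

lemma continuous_on_radial_density: "continuous_on {0..R} radial_density"
proof -
  have "continuous_on {0..R} (\<lambda>s. f (dilate n s (basis0 n)))"
    by (rule continuous_on_compose2[OF continuous_f continuous_on_subset[OF continuous_on_dilate]])
       (auto simp: dilate_in_Rn)
  thus ?thesis unfolding radial_density_def profile_def by (intro continuous_intros)
qed

lemma mode_exists: "\<exists>m. 0 < m \<and> m \<le> R \<and> (\<forall>t\<in>{0..R}. radial_density t \<le> radial_density m)"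
proof -
  obtain m where m: "m \<in> {0..R}" "\<forall>t\<in>{0..R}. radial_density t \<le> radial_density m"
    using continuous_attains_sup[OF compact_Icc _ continuous_on_radial_density] R_pos by auto
  have "0 < radial_density R" using profile_pos R_pos by (simp add: radial_density_def)
  moreover have "radial_density 0 = 0" using n_ge_2 by (simp add: radial_density_def k_def)
  ultimately have "m \<noteq> 0" using m(2)[rule_format, of R] R_pos by auto
  thus ?thesis using m by (intro exI[of _ m]) auto
qed

definition "mode = (SOME m. 0 < m \<and> m \<le> R \<and> (\<forall>t\<in>{0..R}. radial_density t \<le> radial_density m))"

lemma mode: "0 < mode" "mode \<le> R" "\<And>t. 0 \<le> t \<Longrightarrow> t \<le> R \<Longrightarrow> radial_density t \<le> radial_density mode"
  using someI_ex[OF mode_exists] unfolding mode_def[symmetric] by auto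

text \<open>The factor \<open>exp (2 * D)\<close> pays for comparing \<open>f\<close> with the profile at \<open>x\<close> and at \<open>q x\<close>.\<close>

lemma dilate_le_away_from_mode:
  assumes x: "x \<in> Rn n" "0 < enorm n x" "enorm n x \<noteq> mode" "enorm n x \<le> R"
    and q: "0 < q" "q * enorm n x \<le> R" and away: "0 \<le> (q - 1) * (enorm n x - mode)"
  shows "q ^ n * f (dilate n q x) \<le> q * exp (2 * D - k * log_excess q) * f x"
proof -
  define t where "t = enorm n x"
  have t: "0 < t" "t \<le> R" using x by (auto simp: t_def)
  have qt: "enorm n (dilate n q x) = q * t" using q by (simp add: enorm_dilate t_def)
  have decay: "(q * t) ^ k * profile (q * t) \<le> exp (- real k * log_excess q) * (t ^ k * profile t)"
    using power_mult_log_concave_decay[OF log_concave_profile mode(1)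
        profile_pos[OF less_imp_le[OF mode(1)] mode(2)] t(1) _ q(1)]
      mode(3)[of t] x away t by (simp add: t_def radial_density_def)
  have "f (dilate n q x) \<le> exp D * profile (q * t)"
    using f_le_profile[OF dilate_in_Rn, of q x] qt q(2) by (simp add: t_def)
  hence "t ^ k * (q ^ k * f (dilate n q x)) \<le> (q * t) ^ k * (exp D * profile (q * t))"
    using q t by (simp add: power_mult_distrib mult.left_commute)
  also have "\<dots> \<le> exp D * (exp (- real k * log_excess q) * (t ^ k * profile t))"
    using decay by (simp add: mult.left_commute)
  also have "\<dots> \<le> exp D * (exp (- real k * log_excess q) * (t ^ k * (exp D * f x)))"
    using profile_le_f[OF x(1)] x t by (simp add: t_def)
  also have "\<dots> = t ^ k * (exp (2 * D - k * log_excess q) * f x)"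
  proof -
    have "exp (2 * D - k * log_excess q) = exp D * exp D * exp (- real k * log_excess q)"
      by (simp add: exp_add[symmetric])
    thus ?thesis by (simp add: algebra_simps)
  qed
  finally have "q ^ k * f (dilate n q x) \<le> exp (2 * D - k * log_excess q) * f x"
    using t by simp
  hence "q * (q ^ k * f (dilate n q x)) \<le> q * (exp (2 * D - k * log_excess q) * f x)"
    using q by simp
  moreover have "q ^ n = q * q ^ k" by (metis n_Suc_k power_Suc)
  ultimately show ?thesis by (simp add: mult.assoc)
qed

lemma radial_density_mode_pos: "0 < radial_density mode"
  using mode profile_pos[of mode] by (simp add: radial_density_def)

lemma radial_density_half_R_lt:
  assumes small: "8 * D < k" and mode_small: "mode < R / 4"
  shows "exp (2 * D) * radial_density (R / 2) < radial_density mode"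
proof -
  have "radial_density (2 * (R / 4)) \<le> exp (- real k * log_excess 2) * radial_density (R / 4)"
    using power_mult_log_concave_decay[OF log_concave_profile mode(1)
        profile_pos[OF less_imp_le[OF mode(1)] mode(2)], of "R / 4" 2]
      mode(1) mode(3)[of "R / 4"] mode_small R_pos
    by (simp add: radial_density_def)
  also have "\<dots> \<le> exp (- real k * log_excess 2) * radial_density mode"
    using mode(3)[of "R / 4"] R_pos by simp
  finally have "exp (2 * D) * radial_density (R / 2)
      \<le> exp (2 * D) * (exp (- real k * log_excess 2) * radial_density mode)"
    by simp
  also have "\<dots> = exp (2 * D - k * log_excess 2) * radial_density mode"
    by (simp add: mult.assoc[symmetric] exp_add[symmetric])
  also have "\<dots> < 1 * radial_density mode"
  proof (intro mult_strict_right_mono radial_density_mode_pos)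
    have "real k * (1 / 4) \<le> real k * log_excess 2"
      using quarter_le_log_excess_2 by (intro mult_left_mono) auto
    thus "exp (2 * D - k * log_excess 2) < 1" using small by simp
  qed
  finally show ?thesis by simp
qed

lemma half_R_below_mode_on_ray:
  assumes small: "8 * D < k" and mode_small: "mode < R / 4" and x: "x \<in> Rn n" "0 < enorm n x"
  shows "(R / 2) ^ k * f (dilate n (R / (2 * enorm n x)) x) < mode ^ k * f (dilate n (mode / enorm n x) x)"
proof -
  have enorm_mode: "enorm n (dilate n (mode / enorm n x) x) = mode"
    and enorm_half_R: "enorm n (dilate n (R / (2 * enorm n x)) x) = R / 2"
    using x R_pos mode(1) by (simp_all add: enorm_dilate)
  have "(R / 2) ^ k * f (dilate n (R / (2 * enorm n x)) x) \<le> exp D * radial_density (R / 2)"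
    using f_le_profile[OF dilate_in_Rn, of "R / (2 * enorm n x)" x] enorm_half_R R_pos
    by (simp add: radial_density_def mult.left_commute)
  also have "\<dots> < exp (- D) * radial_density mode"
  proof -
    have "exp (2 * D) = exp D * exp D" by (simp add: exp_add[symmetric])
    thus ?thesis using radial_density_half_R_lt[OF small mode_small] by (simp add: exp_minus field_simps)
  qed
  also have "\<dots> \<le> mode ^ k * f (dilate n (mode / enorm n x) x)"
    using profile_le_f[OF dilate_in_Rn, of "mode / enorm n x" x] enorm_mode mode
    by (simp add: radial_density_def exp_minus field_simps)
  finally show ?thesis .
qed

text \<open>Since the ray through \<open>x\<close> is already past its maximum at radius \<open>R/2\<close>, log-concavity
  makes \<open>f\<close> decay along it beyond \<open>x\<close>.\<close>

lemma dilate_2_le_far: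
  assumes small: "8 * D < k" and mode_small: "mode < R / 4"
    and x: "x \<in> Rn n" "R / 2 \<le> enorm n x"
  shows "2 ^ n * f (dilate n 2 x) \<le> 2 * exp (- real k / 4) * f x"
proof -
  define s where "s = enorm n x"
  define ray where "ray u = f (dilate n u x)" for u
  define a where "a = mode / s"
  define b where "b = R / (2 * s)"
  have s: "0 < s" "R / 2 \<le> s" using x R_pos by (auto simp: s_def)
  have ab: "0 < a" "a < b" "b \<le> 1"
    using mode s R_pos mode_small by (auto simp: a_def b_def field_simps)
  have ray: "log_concave_fun ray"
    unfolding ray_def by (rule log_concave_restrict_ray[OF log_concave])
  have ray_a: "0 < ray a"
    unfolding ray_def using f_pos[OF dilate_in_Rn] mode s by (simp add: enorm_dilate a_def s_def)
  have "s ^ k * (b ^ k * ray b) = (R / 2) ^ k * f (dilate n b x)"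
    using s by (simp add: ray_def b_def power_mult_distrib[symmetric])
  also have "\<dots> < mode ^ k * f (dilate n a x)"
    using half_R_below_mode_on_ray[OF small mode_small x(1)] s by (simp add: a_def b_def s_def)
  also have "\<dots> = s ^ k * (a ^ k * ray a)"
    using s by (simp add: ray_def a_def power_mult_distrib[symmetric])
  finally have b_below_a: "b ^ k * ray b < a ^ k * ray a"
    using s by simp
  have "(1 / b * b) ^ k * ray (1 / b * b) \<le> exp (- real k * log_excess (1 / b)) * (b ^ k * ray b)"
    using ab b_below_a by (intro power_mult_log_concave_decay[OF ray ab(1) ray_a]) auto
  also have "\<dots> \<le> 1 * (b ^ k * ray b)"
    using ab log_excess_nonneg[of "1 / b"] log_concave_fun_nonneg[OF ray] by (intro mult_right_mono) auto
  finally have "1 ^ k * ray 1 \<le> a ^ k * ray a"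
    using ab b_below_a by simp
  hence "(2 * 1) ^ k * ray (2 * 1) \<le> exp (- real k * log_excess 2) * (1 ^ k * ray 1)"
    using ab by (intro power_mult_log_concave_decay[OF ray ab(1) ray_a]) auto
  also have "\<dots> \<le> exp (- real k / 4) * ray 1"
  proof -
    have "real k * (1 / 4) \<le> real k * log_excess 2"
      using quarter_le_log_excess_2 by (intro mult_left_mono) auto
    hence "exp (- real k * log_excess 2) \<le> exp (- real k / 4)" by simp
    thus ?thesis
      using log_concave_fun_nonneg[OF ray, of 1] unfolding power_one mult_1 by (rule mult_right_mono)
  qed
  finally have "2 ^ k * f (dilate n 2 x) \<le> exp (- real k / 4) * f x"
    using x by (simp add: ray_def dilate_1)
  moreover have "(2::real) ^ n = 2 * 2 ^ k" by (metis n_Suc_k power_Suc)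
  ultimately show ?thesis by (simp add: mult.assoc)
qed

lemma integrable_restrict_f:
  assumes [measurable]: "Measurable.pred (lebn n) P"
  shows "integrable (lebn n) (\<lambda>x. if P x then f x else 0)"
  by (rule Bochner_Integration.integrable_bound[OF integrable_f])
     (auto intro: AE_mp[OF AE_lebn_Rn] simp: f_nonneg)

lemma mass_mono:
  assumes [measurable]: "Measurable.pred (lebn n) P" "Measurable.pred (lebn n) Q"
    and PQ: "\<And>x. P x \<Longrightarrow> Q x"
  shows "(\<integral>x. (if P x then f x else 0) \<partial>lebn n) \<le> (\<integral>x. (if Q x then f x else 0) \<partial>lebn n)"
proof (rule integral_mono_AE)
  show "AE x in lebn n. (if P x then f x else 0) \<le> (if Q x then f x else 0)"
    using AE_lebn_Rn by eventually_elim (simp add: PQ f_nonneg)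
qed (simp_all add: integrable_restrict_f)

lemma AE_enorm_nonzero: "AE x in lebn n. enorm n x \<noteq> 0"
  using AE_lebn_enorm_nonzero n_ge_2 by simp

lemma mass_le_by_dilation:
  assumes q: "0 < q" and B: "0 \<le> B" and [measurable]: "Measurable.pred (lebn n) P"
    and le: "\<And>x. x \<in> Rn n \<Longrightarrow> enorm n x \<noteq> 0 \<Longrightarrow> P (dilate n q x) \<Longrightarrow>
               q ^ n * f (dilate n q x) \<le> B * f x"
  shows "(\<integral>x. (if P x then f x else 0) \<partial>lebn n) \<le> B"
proof -
  have "(\<integral>x. (if P x then f x else 0) \<partial>lebn n) \<le> (\<integral>x. B * f x \<partial>lebn n)"
  proof (rule integral_le_by_dilation[OF q integrable_restrict_f])
    show "AE x in lebn n. q ^ n * (if P (dilate n q x) then f (dilate n q x) else 0) \<le> B * f x"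
      using AE_lebn_Rn AE_enorm_nonzero
      by eventually_elim (auto simp: le B f_nonneg)
  qed (use integrable_f f_nonneg in auto)
  thus ?thesis by (simp add: integral_f)
qed

lemma inner_mass_le:
  assumes q: "0 < q" "q \<le> 1"
  shows "(\<integral>x. (if enorm n x < q * mode then f x else 0) \<partial>lebn n) \<le> q * exp (2 * D - k * log_excess q)"
proof (rule mass_le_by_dilation[OF q(1)])
  fix x assume x: "x \<in> Rn n" "enorm n x \<noteq> 0" "enorm n (dilate n q x) < q * mode"
  hence below: "enorm n x < mode" using q by (simp add: enorm_dilate)
  have "q * enorm n x \<le> enorm n x" using q enorm_nonneg by (simp add: mult_left_le_one_le)
  hence "q * enorm n x \<le> R" using below mode(2) by linarith
  thus "q ^ n * f (dilate n q x) \<le> q * exp (2 * D - k * log_excess q) * f x"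
    using x q below mode(2) enorm_nonneg[of n x]
    by (intro dilate_le_away_from_mode) (auto intro!: mult_nonpos_nonpos)
qed (use q in auto)

lemma outer_mass_le:
  assumes q: "1 \<le> q"
  shows "(\<integral>x. (if q * mode < enorm n x \<and> enorm n x < R then f x else 0) \<partial>lebn n)
    \<le> q * exp (2 * D - k * log_excess q)"
proof (rule mass_le_by_dilation)
  fix x assume x: "x \<in> Rn n" "enorm n x \<noteq> 0"
    and "q * mode < enorm n (dilate n q x) \<and> enorm n (dilate n q x) < R"
  hence above: "mode < enorm n x" "q * enorm n x < R" using q by (auto simp: enorm_dilate)
  have "1 * enorm n x \<le> q * enorm n x" using q enorm_nonneg by (intro mult_right_mono)
  hence "enorm n x \<le> R" using above by linarith
  thus "q ^ n * f (dilate n q x) \<le> q * exp (2 * D - k * log_excess q) * f x"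
    using x q above mode(1) by (intro dilate_le_away_from_mode) auto
qed (use q in auto)

lemma far_mass_le:
  assumes small: "8 * D < k" and mode_small: "mode < R / 4"
  shows "(\<integral>x. (if R \<le> enorm n x then f x else 0) \<partial>lebn n) \<le> 2 * exp (- real k / 4)"
proof (rule mass_le_by_dilation)
  fix x assume "x \<in> Rn n" "R \<le> enorm n (dilate n 2 x)"
  thus "2 ^ n * f (dilate n 2 x) \<le> 2 * exp (- real k / 4) * f x"
    by (intro dilate_2_le_far[OF small mode_small]) (auto simp: enorm_dilate)
qed auto

lemma tail_mass_le:
  assumes small: "8 * D < k" and mode_small: "mode < R / 4" and q: "1 \<le> q"
  shows "(\<integral>x. (if q * mode < enorm n x then f x else 0) \<partial>lebn n)
    \<le> q * exp (2 * D - k * log_excess q) + 2 * exp (- real k / 4)"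
proof -
  let ?inner = "\<lambda>x. if q * mode < enorm n x \<and> enorm n x < R then f x else 0"
  let ?far = "\<lambda>x. if R \<le> enorm n x then f x else 0"
  have "(\<integral>x. (if q * mode < enorm n x then f x else 0) \<partial>lebn n) \<le> (\<integral>x. ?inner x + ?far x \<partial>lebn n)"
  proof (rule integral_mono_AE)
    show "integrable (lebn n) (\<lambda>x. if q * mode < enorm n x then f x else 0)"
      by (rule integrable_restrict_f) measurable
    show "integrable (lebn n) (\<lambda>x. ?inner x + ?far x)"
      by (intro Bochner_Integration.integrable_add integrable_restrict_f) measurable
    show "AE x in lebn n. (if q * mode < enorm n x then f x else 0) \<le> ?inner x + ?far x"
      using AE_lebn_Rn by eventually_elim (simp add: f_nonneg)
  qed
  also have "\<dots> = (\<integral>x. ?inner x \<partial>lebn n) + (\<integral>x. ?far x \<partial>lebn n)"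
    by (intro Bochner_Integration.integral_add integrable_restrict_f) measurable
  also have "\<dots> \<le> q * exp (2 * D - k * log_excess q) + 2 * exp (- real k / 4)"
    by (intro add_mono outer_mass_le far_mass_le small mode_small q)
  finally show ?thesis .
qed

lemma far_second_moment_le:
  assumes small: "8 * D < k" and mode_small: "mode < R / 4"
    and integrable: "integrable (lebn n) (\<lambda>x. (enorm n x)\<^sup>2 * f x)"
  shows "(\<integral>x. (if R \<le> enorm n x then (enorm n x)\<^sup>2 * f x else 0) \<partial>lebn n)
     \<le> 8 * exp (- real k / 4) * (\<integral>x. (enorm n x)\<^sup>2 * f x \<partial>lebn n)"
proof -
  have "(\<integral>x. (if R \<le> enorm n x then (enorm n x)\<^sup>2 * f x else 0) \<partial>lebn n)
      \<le> (\<integral>x. 8 * exp (- real k / 4) * ((enorm n x)\<^sup>2 * f x) \<partial>lebn n)"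
  proof (rule integral_le_by_dilation[of 2])
    show "integrable (lebn n) (\<lambda>x. if R \<le> enorm n x then (enorm n x)\<^sup>2 * f x else 0)"
      by (rule Bochner_Integration.integrable_bound[OF integrable])
         (auto intro: AE_mp[OF AE_lebn_Rn] simp: f_nonneg)
    show "AE x in lebn n. 2 ^ n * (if R \<le> enorm n (dilate n 2 x)
        then (enorm n (dilate n 2 x))\<^sup>2 * f (dilate n 2 x) else 0) \<le> 8 * exp (- real k / 4) * ((enorm n x)\<^sup>2 * f x)"
      using AE_lebn_Rn
    proof eventually_elim
      case (elim x)
      show ?case
      proof (cases "R \<le> enorm n (dilate n 2 x)")
        case True
        hence "2 ^ n * f (dilate n 2 x) \<le> 2 * exp (- real k / 4) * f x"
          using elim by (intro dilate_2_le_far[OF small mode_small]) (auto simp: enorm_dilate)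
        hence "(4 * (enorm n x)\<^sup>2) * (2 ^ n * f (dilate n 2 x))
            \<le> (4 * (enorm n x)\<^sup>2) * (2 * exp (- real k / 4) * f x)"
          by (intro mult_left_mono) auto
        thus ?thesis using True by (simp add: enorm_dilate power_mult_distrib algebra_simps)
      qed (use elim f_nonneg in simp)
    qed
  qed (use integrable f_nonneg in auto)
  thus ?thesis by simp
qed

section \<open>Moments of the norm\<close>

lemma inner_layer_mass_le:
  assumes v: "0 < v" and kv: "16 * (2 * D + 1) \<le> real k * v\<^sup>2" and j: "1 \<le> j"
  shows "(\<integral>x. (if enorm n x < (1 - real j * v) * mode then f x else 0) \<partial>lebn n) \<le> exp (- real j)"
proof (cases "real j * v < 1")
  case True
  have "(\<integral>x. (if enorm n x < (1 - real j * v) * mode then f x else 0) \<partial>lebn n)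
      \<le> (1 - real j * v) * exp (2 * D - k * log_excess (1 - real j * v))"
    using True v by (intro inner_mass_le) auto
  also have "\<dots> \<le> exp (- real j)"
    using lower_layer_weight_le[OF kv D_nonneg _ v j True] by simp
  finally show ?thesis .
next
  case False
  hence "(1 - real j * v) * mode \<le> 0" using mode(1) by (simp add: mult_nonpos_nonneg)
  hence "\<not> enorm n x < (1 - real j * v) * mode" for x using enorm_nonneg[of n x] by linarith
  thus ?thesis by simp
qed

lemma first_moment_layer_bound:
  assumes v: "0 < v" and integrable: "integrable (lebn n) (\<lambda>x. enorm n x * f x)"
  shows "mode - (\<integral>x. enorm n x * f x \<partial>lebn n) \<le> mode * v + mode * v *
    (\<Sum>j=1..nat \<lceil>1 / v\<rceil>. (\<integral>x. (if enorm n x < (1 - real j * v) * mode then f x else 0) \<partial>lebn n))"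
proof -
  define J where "J = nat \<lceil>1 / v\<rceil>"
  let ?layers = "\<lambda>x. mode * v * f x
      + (\<Sum>j=1..J. mode * v * (if enorm n x < (1 - real j * v) * mode then f x else 0))"
  have integrable_restrict:
    "integrable (lebn n) (\<lambda>x. if enorm n x < (1 - real j * v) * mode then f x else 0)" for j
    by (rule integrable_restrict_f) measurable
  have "AE x in lebn n. (mode - enorm n x) * f x \<le> ?layers x"
    using AE_lebn_Rn
  proof eventually_elim
    case (elim x)
    have "(mode - enorm n x) * f x
        \<le> (mode * v + (\<Sum>j=1..J. mode * v * of_bool (enorm n x < (1 - real j * v) * mode))) * f x"
      unfolding J_def using mode(1) v enorm_nonneg f_nonneg[OF elim]
      by (intro mult_right_mono lower_layer_sum) auto
    also have "\<dots> = ?layers x"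
      unfolding sum_distrib_right distrib_right by (intro arg_cong2[where f = "(+)"] sum.cong) auto
    finally show ?case .
  qed
  hence "(\<integral>x. (mode - enorm n x) * f x \<partial>lebn n) \<le> (\<integral>x. ?layers x \<partial>lebn n)"
    using integrable_f integrable integrable_restrict
    by (intro integral_mono_AE) (auto simp: left_diff_distrib)
  also have "\<dots> = mode * v + mode * v *
      (\<Sum>j=1..J. (\<integral>x. (if enorm n x < (1 - real j * v) * mode then f x else 0) \<partial>lebn n))"
    using integrable_f integrable_restrict by (simp add: integral_sum integral_f sum_distrib_left)
  finally show ?thesis
    using integrable_f integrable by (simp add: J_def left_diff_distrib integral_f)
qed

lemma first_moment_ge:
  assumes v: "0 < v" and kv: "16 * (2 * D + 1) \<le> real k * v\<^sup>2"
    and integrable: "integrable (lebn n) (\<lambda>x. enorm n x * f x)"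
  shows "mode * (1 - 2 * v) \<le> (\<integral>x. enorm n x * f x \<partial>lebn n)"
proof -
  have "(\<Sum>j=1..nat \<lceil>1 / v\<rceil>. (\<integral>x. (if enorm n x < (1 - real j * v) * mode then f x else 0) \<partial>lebn n))
      \<le> (\<Sum>j=1..nat \<lceil>1 / v\<rceil>. exp (- real j))"
    using inner_layer_mass_le[OF v kv] by (intro sum_mono) auto
  also have "\<dots> \<le> 1" by (rule sum_exp_neg_le_1)
  finally have "mode * v * (\<Sum>j=1..nat \<lceil>1 / v\<rceil>.
      (\<integral>x. (if enorm n x < (1 - real j * v) * mode then f x else 0) \<partial>lebn n)) \<le> mode * v * 1"
    using mode(1) v by (intro mult_left_mono) auto
  thus ?thesis using first_moment_layer_bound[OF v integrable] by (simp add: algebra_simps)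
qed

lemma second_moment_layer_bound:
  assumes v: "0 < v" and integrable: "integrable (lebn n) (\<lambda>x. (enorm n x)\<^sup>2 * f x)"
  defines "s \<equiv> \<lambda>j::nat. (1 + real j * v) * mode"
  shows "(\<integral>x. (enorm n x)\<^sup>2 * f x \<partial>lebn n)
    \<le> (s 1)\<^sup>2 + (\<Sum>j=1..nat \<lceil>R / (mode * v)\<rceil>.
          ((s (Suc j))\<^sup>2 - (s j)\<^sup>2) * (\<integral>x. (if s j < enorm n x then f x else 0) \<partial>lebn n))
      + (\<integral>x. (if R \<le> enorm n x then (enorm n x)\<^sup>2 * f x else 0) \<partial>lebn n)"
proof -
  define J where "J = nat \<lceil>R / (mode * v)\<rceil>"
  let ?layers = "\<lambda>x. (s 1)\<^sup>2 * f x + (\<Sum>j=1..J. ((s (Suc j))\<^sup>2 - (s j)\<^sup>2) * (if s j < enorm n x then f x else 0))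
      + (if R \<le> enorm n x then (enorm n x)\<^sup>2 * f x else 0)"
  have integrable_restrict: "integrable (lebn n) (\<lambda>x. if s j < enorm n x then f x else 0)" for j
    by (rule integrable_restrict_f) measurable
  have integrable_far: "integrable (lebn n) (\<lambda>x. if R \<le> enorm n x then (enorm n x)\<^sup>2 * f x else 0)"
    by (rule Bochner_Integration.integrable_bound[OF integrable])
       (auto intro: AE_mp[OF AE_lebn_Rn] simp: f_nonneg)
  have "AE x in lebn n. (enorm n x)\<^sup>2 * f x \<le> ?layers x"
    using AE_lebn_Rn
  proof eventually_elim
    case (elim x)
    have "(enorm n x)\<^sup>2 \<le> (s 1)\<^sup>2 + (\<Sum>j=1..J. ((s (Suc j))\<^sup>2 - (s j)\<^sup>2) * of_bool (s j < enorm n x))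
        + of_bool (R \<le> enorm n x) * (enorm n x)\<^sup>2"
      using upper_layer_sum[OF mode(1) v enorm_nonneg, of n x R] by (simp add: s_def J_def)
    hence "(enorm n x)\<^sup>2 * f x \<le> ((s 1)\<^sup>2 + (\<Sum>j=1..J. ((s (Suc j))\<^sup>2 - (s j)\<^sup>2) * of_bool (s j < enorm n x))
        + of_bool (R \<le> enorm n x) * (enorm n x)\<^sup>2) * f x"
      using f_nonneg[OF elim] by (rule mult_right_mono)
    also have "\<dots> = ?layers x"
      unfolding sum_distrib_right distrib_right by (intro arg_cong2[where f = "(+)"] sum.cong) auto
    finally show ?case .
  qed
  hence "(\<integral>x. (enorm n x)\<^sup>2 * f x \<partial>lebn n) \<le> (\<integral>x. ?layers x \<partial>lebn n)"
    using integrable integrable_f integrable_restrict integrable_far by (intro integral_mono_AE) auto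
  also have "\<dots> = (s 1)\<^sup>2 + (\<Sum>j=1..J. ((s (Suc j))\<^sup>2 - (s j)\<^sup>2) * (\<integral>x. (if s j < enorm n x then f x else 0) \<partial>lebn n))
      + (\<integral>x. (if R \<le> enorm n x then (enorm n x)\<^sup>2 * f x else 0) \<partial>lebn n)"
    using integrable_f integrable_restrict integrable_far by (simp add: integral_sum integral_f)
  finally show ?thesis by (simp add: J_def)
qed

lemma outer_layer_term_le:
  assumes v: "0 < v" "v \<le> 1" and kv: "16 * (2 * D + 1) \<le> real k * v\<^sup>2"
    and small: "8 * D < k" and mode_small: "mode < R / 4" and j: "1 \<le> j"
  defines "s \<equiv> \<lambda>j::nat. (1 + real j * v) * mode"
  shows "((s (Suc j))\<^sup>2 - (s j)\<^sup>2) * (\<integral>x. (if s j < enorm n x then f x else 0) \<partial>lebn n)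
    \<le> 3 * mode\<^sup>2 * v * exp (- real j) + 2 * exp (- real k / 4) * ((s (Suc j))\<^sup>2 - (s j)\<^sup>2)"
proof -
  let ?w = "(1 + real j * v) * exp (2 * D - k * log_excess (1 + real j * v))"
  have d_eq: "(s (Suc j))\<^sup>2 - (s j)\<^sup>2 = mode\<^sup>2 * v * (2 + (2 * real j + 1) * v)"
    by (simp add: s_def power2_eq_square algebra_simps)
  have "v \<le> 1 + real j * v" using v mult_nonneg_nonneg[of "real j" v] by linarith
  hence "2 + (2 * real j + 1) * v \<le> 3 * (1 + real j * v)" by (simp add: algebra_simps)
  hence d_le: "(s (Suc j))\<^sup>2 - (s j)\<^sup>2 \<le> mode\<^sup>2 * v * (3 * (1 + real j * v))"
    unfolding d_eq using v by (intro mult_left_mono) auto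
  have "((s (Suc j))\<^sup>2 - (s j)\<^sup>2) * (\<integral>x. (if s j < enorm n x then f x else 0) \<partial>lebn n)
      \<le> ((s (Suc j))\<^sup>2 - (s j)\<^sup>2) * (?w + 2 * exp (- real k / 4))"
    unfolding s_def using v mode(1) d_eq
    by (intro mult_left_mono tail_mass_le small mode_small) (auto simp: s_def)
  also have "\<dots> \<le> mode\<^sup>2 * v * (3 * (1 + real j * v)) * ?w + 2 * exp (- real k / 4) * ((s (Suc j))\<^sup>2 - (s j)\<^sup>2)"
    using mult_right_mono[OF d_le, of ?w] v by (simp add: distrib_left)
  also have "mode\<^sup>2 * v * (3 * (1 + real j * v)) * ?w
      = 3 * mode\<^sup>2 * v * ((1 + real j * v)\<^sup>2 * exp (2 * D - k * log_excess (1 + real j * v)))"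
    by (simp add: power2_eq_square)
  also have "\<dots> \<le> 3 * mode\<^sup>2 * v * exp (- real j)"
    using upper_layer_weight_le[OF kv D_nonneg _ v j] v by (intro mult_left_mono) auto
  finally show ?thesis by simp
qed

lemma outer_layer_increments_le:
  assumes v: "0 < v" "v \<le> 1"
  defines "s \<equiv> \<lambda>j::nat. (1 + real j * v) * mode"
  shows "(\<Sum>j=1..nat \<lceil>R / (mode * v)\<rceil>. (s (Suc j))\<^sup>2 - (s j)\<^sup>2) \<le> 16 * R\<^sup>2"
proof -
  define J where "J = nat \<lceil>R / (mode * v)\<rceil>"
  have "0 \<le> R / (mode * v)" using R_pos mode(1) v by simp
  hence "real J = of_int \<lceil>R / (mode * v)\<rceil>" unfolding J_def by simp
  hence "real J \<le> R / (mode * v) + 1" using ceiling_correct[of "R / (mode * v)"] by linarith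
  hence "mode * v * real J \<le> R + mode * v" using mode(1) v by (simp add: field_simps)
  moreover have "mode * v \<le> mode" using mode(1) v by (simp add: mult_left_le)
  ultimately have "s (Suc J) \<le> 4 * R" using mode(2) by (simp add: s_def algebra_simps)
  hence "(s (Suc J))\<^sup>2 \<le> (4 * R)\<^sup>2"
    using v mode(1) by (intro power_mono) (auto simp: s_def)
  also have "\<dots> = 16 * R\<^sup>2" by (simp add: power_mult_distrib)
  finally have top: "(s (Suc J))\<^sup>2 \<le> 16 * R\<^sup>2" .
  have "(\<Sum>j=1..J. (s (Suc j))\<^sup>2 - (s j)\<^sup>2) = (s (Suc J))\<^sup>2 - (s 1)\<^sup>2"
    by (rule sum_Suc_diff) simp
  thus ?thesis using top zero_le_power2[of "s 1"] unfolding J_def by linarith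
qed

lemma outer_layer_sum_le:
  assumes v: "0 < v" "v \<le> 1" and kv: "16 * (2 * D + 1) \<le> real k * v\<^sup>2"
    and small: "8 * D < k" and mode_small: "mode < R / 4"
  defines "s \<equiv> \<lambda>j::nat. (1 + real j * v) * mode"
  shows "(\<Sum>j=1..nat \<lceil>R / (mode * v)\<rceil>.
          ((s (Suc j))\<^sup>2 - (s j)\<^sup>2) * (\<integral>x. (if s j < enorm n x then f x else 0) \<partial>lebn n))
    \<le> 3 * mode\<^sup>2 * v + 32 * R\<^sup>2 * exp (- real k / 4)"
proof -
  define J where "J = nat \<lceil>R / (mode * v)\<rceil>"
  have "(\<Sum>j=1..J. ((s (Suc j))\<^sup>2 - (s j)\<^sup>2) * (\<integral>x. (if s j < enorm n x then f x else 0) \<partial>lebn n))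
      \<le> (\<Sum>j=1..J. 3 * mode\<^sup>2 * v * exp (- real j) + 2 * exp (- real k / 4) * ((s (Suc j))\<^sup>2 - (s j)\<^sup>2))"
    unfolding s_def by (intro sum_mono outer_layer_term_le[OF v kv small mode_small]) simp
  also have "\<dots> = 3 * mode\<^sup>2 * v * (\<Sum>j=1..J. exp (- real j))
      + 2 * exp (- real k / 4) * (\<Sum>j=1..J. (s (Suc j))\<^sup>2 - (s j)\<^sup>2)"
    by (simp add: sum.distrib sum_distrib_left)
  also have "\<dots> \<le> 3 * mode\<^sup>2 * v * 1 + 2 * exp (- real k / 4) * (16 * R\<^sup>2)"
    using sum_exp_neg_le_1 outer_layer_increments_le[OF v] v
    by (intro add_mono mult_left_mono) (auto simp: s_def J_def)
  finally show ?thesis by (simp add: J_def mult_ac)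
qed

lemma second_moment_le:
  assumes v: "0 < v" "v \<le> 1" and kv: "16 * (2 * D + 1) \<le> real k * v\<^sup>2"
    and small: "8 * D < k" and mode_small: "mode < R / 4"
    and integrable: "integrable (lebn n) (\<lambda>x. (enorm n x)\<^sup>2 * f x)"
  shows "(\<integral>x. (enorm n x)\<^sup>2 * f x \<partial>lebn n) \<le> mode\<^sup>2 * (1 + 6 * v) + 32 * R\<^sup>2 * exp (- real k / 4)
    + 8 * exp (- real k / 4) * (\<integral>x. (enorm n x)\<^sup>2 * f x \<partial>lebn n)"
proof -
  have "((1 + real 1 * v) * mode)\<^sup>2 = mode\<^sup>2 * (1 + 2 * v + v * v)"
    by (simp add: power2_eq_square algebra_simps)
  also have "\<dots> \<le> mode\<^sup>2 * (1 + 3 * v)"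
    using v by (intro mult_left_mono) (auto simp: mult_left_le)
  finally show ?thesis
    using second_moment_layer_bound[OF v(1) integrable] outer_layer_sum_le[OF v kv small mode_small]
      far_second_moment_le[OF small mode_small integrable]
    by (simp add: algebra_simps)
qed

end

section \<open>Concentration of the norm\<close>

lemma square_div_4_le_exp:
  fixes x :: real
  assumes "0 \<le> x"
  shows "x\<^sup>2 / 4 \<le> exp x"
proof -
  have "x / 2 \<le> exp (x / 2)" using exp_ge_add_one_self[of "x / 2"] by linarith
  hence "(x / 2)\<^sup>2 \<le> exp (x / 2) ^ 2" using assms by (intro power_mono) auto
  thus ?thesis by (simp add: exp_double[symmetric] power_divide)
qed

locale norm_concentration = near_radial_log_concave +
  fixes \<epsilon> :: real
  assumes R_eq: "R = 10 * sqrt n"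
    and eps: "0 < \<epsilon>" "\<epsilon> \<le> 1"
    and D_small: "204800 * D \<le> \<epsilon>\<^sup>2 * n"
    and eps_n: "102400 \<le> \<epsilon>\<^sup>2 * n"
    and n_large: "30000 \<le> n"
    and n_le_second_moment: "n \<le> (\<integral>x. (enorm n x)\<^sup>2 * f x \<partial>lebn n)"
    and second_moment_le_2n: "(\<integral>x. (enorm n x)\<^sup>2 * f x \<partial>lebn n) \<le> 2 * n"
begin

definition "M2 = (\<integral>x. (enorm n x)\<^sup>2 * f x \<partial>lebn n)"

definition "r = sqrt M2"

text \<open>The layer width: small enough to be \<open>O(\<epsilon>)\<close>, large enough for the layer weights in
  \<open>lower_layer_weight_le\<close> and \<open>upper_layer_weight_le\<close> to be summable.\<close>

definition "v = sqrt (16 * (2 * D + 1) / k)"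

lemma integrable_second_moment: "integrable (lebn n) (\<lambda>x. (enorm n x)\<^sup>2 * f x)"
  using n_le_second_moment n_large not_integrable_integral_eq by fastforce

lemma integrable_first_moment: "integrable (lebn n) (\<lambda>x. enorm n x * f x)"
proof (rule Bochner_Integration.integrable_bound)
  show "integrable (lebn n) (\<lambda>x. (enorm n x)\<^sup>2 * f x + f x)"
    using integrable_second_moment integrable_f by simp
  show "AE x in lebn n. norm (enorm n x * f x) \<le> norm ((enorm n x)\<^sup>2 * f x + f x)"
    using AE_lebn_Rn
  proof eventually_elim
    case (elim x)
    have "enorm n x \<le> (enorm n x)\<^sup>2 + 1"
      using sum_squares_ge_zero[of "enorm n x - 1" 0] enorm_nonneg[of n x]
      by (simp add: power2_eq_square algebra_simps)
    hence "enorm n x * f x \<le> ((enorm n x)\<^sup>2 + 1) * f x"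
      using f_nonneg[OF elim] by (intro mult_right_mono)
    thus ?case using f_nonneg[OF elim] enorm_nonneg[of n x] by (simp add: algebra_simps)
  qed
qed measurable

lemma r_pos: "0 < r" and r_squared: "r\<^sup>2 = M2" and r_le: "r \<le> sqrt 2 * sqrt n"
  using n_le_second_moment second_moment_le_2n n_large
  by (auto simp: r_def M2_def real_sqrt_mult[symmetric])

lemma k_ge_half_n: "real n / 2 \<le> real k"
  using real_k n_large by simp

lemma v_pos: "0 < v" and k_v_squared: "real k * v\<^sup>2 = 16 * (2 * D + 1)"
  using D_nonneg real_k n_large by (simp_all add: v_def)

lemma v_le: "v \<le> \<epsilon> / 40"
proof -
  have "16 * (2 * D + 1) * 1600 \<le> \<epsilon>\<^sup>2 * real n / 2"
    using D_small eps_n by simp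
  also have "\<dots> \<le> \<epsilon>\<^sup>2 * real k"
    using mult_left_mono[OF k_ge_half_n, of "\<epsilon>\<^sup>2"] by simp
  finally have "16 * (2 * D + 1) * 1600 \<le> \<epsilon>\<^sup>2 * real k" .
  moreover have "0 < real k" using real_k n_large by simp
  ultimately have "16 * (2 * D + 1) / real k \<le> (\<epsilon> / 40)\<^sup>2"
    by (simp add: field_simps power2_eq_square)
  hence "v \<le> sqrt ((\<epsilon> / 40)\<^sup>2)" unfolding v_def by (rule real_sqrt_le_mono)
  thus ?thesis using eps by simp
qed

lemma first_moment_le_r: "(\<integral>x. enorm n x * f x \<partial>lebn n) \<le> r"
proof -
  have "(\<integral>x. enorm n x * f x \<partial>lebn n) \<le> (\<integral>x. ((enorm n x)\<^sup>2 * f x / r + r * f x) / 2 \<partial>lebn n)"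
  proof (rule integral_mono_AE[OF integrable_first_moment])
    show "integrable (lebn n) (\<lambda>x. ((enorm n x)\<^sup>2 * f x / r + r * f x) / 2)"
      using integrable_second_moment integrable_f by simp
    show "AE x in lebn n. enorm n x * f x \<le> ((enorm n x)\<^sup>2 * f x / r + r * f x) / 2"
      using AE_lebn_Rn
    proof eventually_elim
      case (elim x)
      have "2 * r * enorm n x \<le> (enorm n x)\<^sup>2 + r\<^sup>2"
        using sum_squares_ge_zero[of "enorm n x - r" 0] by (simp add: power2_eq_square algebra_simps)
      hence "enorm n x \<le> ((enorm n x)\<^sup>2 / r + r) / 2" using r_pos by (simp add: field_simps power2_eq_square)
      hence "enorm n x * f x \<le> (((enorm n x)\<^sup>2 / r + r) / 2) * f x"
        using f_nonneg[OF elim] by (intro mult_right_mono)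
      thus ?case by (simp add: field_simps)
    qed
  qed
  also have "\<dots> = (M2 / r + r) / 2"
    using integrable_second_moment integrable_f by (simp add: M2_def integral_f)
  also have "\<dots> = r"
    using r_pos r_squared by (simp add: field_simps power2_eq_square)
  finally show ?thesis .
qed

lemma mode_le_r: "mode \<le> r * (1 + \<epsilon> / 10)"
proof -
  have "1 \<le> (1 + 4 * v) * (1 - 2 * v)"
  proof -
    have "(1 + 4 * v) * (1 - 2 * v) = 1 + v * (2 - 8 * v)" by (simp add: algebra_simps)
    moreover have "0 \<le> v * (2 - 8 * v)" using v_pos v_le eps by (intro mult_nonneg_nonneg) auto
    ultimately show ?thesis by linarith
  qed
  hence "mode \<le> (1 + 4 * v) * (mode * (1 - 2 * v))"
    using mode(1) mult_left_mono[of 1 "(1 + 4 * v) * (1 - 2 * v)" mode] by (simp add: algebra_simps)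
  also have "\<dots> \<le> (1 + 4 * v) * r"
    using first_moment_ge[OF v_pos _ integrable_first_moment] k_v_squared first_moment_le_r v_pos
    by (intro mult_left_mono) auto
  also have "\<dots> \<le> (1 + \<epsilon> / 10) * r"
    using v_le r_pos by (intro mult_right_mono) auto
  finally show ?thesis by (simp add: algebra_simps)
qed

lemma mode_small: "mode < R / 4"
proof -
  have "sqrt 2 < (3/2::real)" by (rule real_less_lsqrt) (auto simp: power2_eq_square)
  have "mode \<le> r * (1 + \<epsilon> / 10)" by (rule mode_le_r)
  also have "\<dots> \<le> (sqrt 2 * sqrt n) * (11/10)" using r_le eps r_pos by (intro mult_mono) auto
  also have "\<dots> < (3/2 * sqrt n) * (11/10)"
    using \<open>sqrt 2 < 3/2\<close> n_large by (intro mult_strict_right_mono) auto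
  also have "\<dots> < R / 4" using n_large by (simp add: R_eq)
  finally show ?thesis .
qed

lemma eps_sq_n_le_n: "\<epsilon>\<^sup>2 * n \<le> n"
proof -
  have "\<epsilon>\<^sup>2 \<le> 1" using eps by (simp add: power_le_one)
  thus ?thesis by (simp add: mult_left_le_one_le)
qed

lemma D_lt_k: "8 * D < k"
  using eps_sq_n_le_n D_small real_k n_large by linarith

lemma exp_k_small: "3208 * exp (- real k / 4) \<le> \<epsilon> / 40"
proof -
  have "401 * 64 * real n \<le> (real k)\<^sup>2"
  proof -
    have "real k * 25665 \<le> real k * real k" using real_k n_large by (intro mult_left_mono) auto
    moreover have "25664 * real n \<le> real k * 25665" using real_k n_large by simp
    ultimately show ?thesis by (simp add: power2_eq_square)
  qed
  also have "(real k)\<^sup>2 \<le> 64 * exp (real k / 4)"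
    using square_div_4_le_exp[of "real k / 4"] by (simp add: power_divide)
  finally have n_le_exp: "401 * real n \<le> exp (real k / 4)" by simp
  have "sqrt 102400 \<le> sqrt (\<epsilon>\<^sup>2 * n)" using eps_n by (rule real_sqrt_le_mono)
  moreover have "sqrt (102400::real) = 320" by (simp add: real_sqrt_unique)
  ultimately have "320 \<le> \<epsilon> * sqrt n" using eps by (simp add: real_sqrt_mult)
  also have "\<dots> \<le> \<epsilon> * n"
  proof -
    have "sqrt (real n) \<le> sqrt ((real n)\<^sup>2)"
      using n_large by (intro real_sqrt_le_mono) (simp add: power2_eq_square)
    thus ?thesis using eps by (intro mult_left_mono) auto
  qed
  finally have "320 \<le> \<epsilon> * n" .
  hence "320 * (401 * real n) \<le> (\<epsilon> * n) * exp (real k / 4)"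
    using n_le_exp eps by (intro mult_mono) auto
  hence "128320 * real n * exp (- real k / 4) \<le> \<epsilon> * real n"
    by (simp add: exp_minus field_simps)
  thus ?thesis using n_large by (simp add: mult_le_cancel_right_pos)
qed

lemma r_le_mode: "r * (1 - \<epsilon> / 10) \<le> mode"
proof -
  define \<eta> where "\<eta> = exp (- real k / 4)"
  have "M2 \<le> mode\<^sup>2 * (1 + 6 * v) + 32 * R\<^sup>2 * \<eta> + 8 * (M2 * \<eta>)"
    using second_moment_le[OF v_pos _ _ D_lt_k mode_small integrable_second_moment] v_le eps k_v_squared
    by (simp add: M2_def \<eta>_def mult_ac)
  moreover have "32 * R\<^sup>2 * \<eta> \<le> 3200 * (M2 * \<eta>)"
    using n_le_second_moment by (simp add: R_eq power_mult_distrib M2_def \<eta>_def)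
  moreover have "M2 * (1 - 3208 * \<eta>) = M2 - 3208 * (M2 * \<eta>)"
    by (simp add: algebra_simps)
  ultimately have bound: "M2 * (1 - 3208 * \<eta>) \<le> mode\<^sup>2 * (1 + 6 * v)"
    by linarith
  have "(1 - \<epsilon> / 10)\<^sup>2 * (1 + 6 * v) \<le> (1 - \<epsilon> / 10)\<^sup>2 * (1 + 3 * \<epsilon> / 20)"
    using v_le by (intro mult_left_mono) auto
  also have "\<dots> = 1 - \<epsilon> / 20 - \<epsilon>\<^sup>2 * (1 / 50 - 3 * \<epsilon> / 2000)"
    by (simp add: power2_eq_square algebra_simps)
  also have "\<dots> \<le> 1 - 3208 * \<eta>"
  proof -
    have "0 \<le> \<epsilon>\<^sup>2 * (1 / 50 - 3 * \<epsilon> / 2000)" using eps by (intro mult_nonneg_nonneg) auto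
    thus ?thesis unfolding \<eta>_def using eps exp_k_small by linarith
  qed
  finally have "M2 * ((1 - \<epsilon> / 10)\<^sup>2 * (1 + 6 * v)) \<le> M2 * (1 - 3208 * \<eta>)"
    using n_le_second_moment by (intro mult_left_mono) (auto simp: M2_def)
  hence "M2 * (1 - \<epsilon> / 10)\<^sup>2 * (1 + 6 * v) \<le> mode\<^sup>2 * (1 + 6 * v)"
    using bound by (simp add: mult.assoc)
  hence "(r * (1 - \<epsilon> / 10))\<^sup>2 \<le> mode\<^sup>2"
    using v_pos r_squared by (simp add: power_mult_distrib)
  thus ?thesis using mode(1) by (rule power2_le_imp_le[OF _ less_imp_le])
qed

lemma exponent_bound: "2 * D - real k * (\<epsilon>\<^sup>2 / 12) \<le> - (\<epsilon>\<^sup>2 * n / 48)"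
proof -
  have "\<epsilon>\<^sup>2 * (real n / 2) \<le> \<epsilon>\<^sup>2 * real k"
    using k_ge_half_n by (intro mult_left_mono) auto
  moreover have "\<epsilon>\<^sup>2 * (real n / 2) = \<epsilon>\<^sup>2 * real n / 2" "real k * (\<epsilon>\<^sup>2 / 12) = \<epsilon>\<^sup>2 * real k / 12"
    by simp_all
  ultimately show ?thesis using D_small eps_n by linarith
qed

lemma upper_deviation_le:
  "(\<integral>x. (if (1 + \<epsilon>) * r < enorm n x then f x else 0) \<partial>lebn n) \<le> 7 / 2 * exp (- (\<epsilon>\<^sup>2 * n / 48))"
proof -
  define q where "q = 1 + \<epsilon> / 2"
  have q: "1 \<le> q" "q \<le> 3 / 2" using eps by (auto simp: q_def)
  have "q * mode \<le> q * (r * (1 + \<epsilon> / 10))" using mode_le_r q by (intro mult_left_mono) auto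
  also have "\<dots> = r * (1 + \<epsilon> * 3 / 5 + \<epsilon>\<^sup>2 / 20)" by (simp add: q_def power2_eq_square field_simps)
  also have "\<dots> \<le> r * (1 + \<epsilon>)"
  proof -
    have "\<epsilon> * \<epsilon> \<le> \<epsilon>" using eps mult_left_le[of \<epsilon> \<epsilon>] by simp
    hence "1 + \<epsilon> * 3 / 5 + \<epsilon>\<^sup>2 / 20 \<le> 1 + \<epsilon>" unfolding power2_eq_square using eps by linarith
    thus ?thesis using r_pos by (intro mult_left_mono) auto
  qed
  finally have q_mode: "q * mode \<le> (1 + \<epsilon>) * r" by (simp add: mult.commute)
  have "\<epsilon>\<^sup>2 / 12 \<le> \<epsilon>\<^sup>2 / (8 * q)" using q by (intro divide_left_mono) auto
  also have "\<dots> = (q - 1)\<^sup>2 / (2 * q)" by (simp add: q_def power_divide)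
  finally have "\<epsilon>\<^sup>2 / 12 \<le> (q - 1)\<^sup>2 / (2 * q)" .
  hence "real k * (\<epsilon>\<^sup>2 / 12) \<le> real k * log_excess q"
    using log_excess_ge_above[OF q(1)] by (intro mult_left_mono) auto
  hence "exp (2 * D - k * log_excess q) \<le> exp (- (\<epsilon>\<^sup>2 * n / 48))"
    using exponent_bound by simp
  hence "q * exp (2 * D - k * log_excess q) \<le> 3 / 2 * exp (- (\<epsilon>\<^sup>2 * n / 48))"
    using q by (intro mult_mono) auto
  moreover have "\<epsilon>\<^sup>2 * n / 48 \<le> real k / 4" using eps_sq_n_le_n k_ge_half_n by linarith
  hence "exp (- real k / 4) \<le> exp (- (\<epsilon>\<^sup>2 * n / 48))" by simp
  moreover have "(\<integral>x. (if (1 + \<epsilon>) * r < enorm n x then f x else 0) \<partial>lebn n)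
      \<le> (\<integral>x. (if q * mode < enorm n x then f x else 0) \<partial>lebn n)"
    using q_mode by (intro mass_mono) auto
  ultimately show ?thesis
    using tail_mass_le[OF D_lt_k mode_small q(1)] by linarith
qed

lemma lower_deviation_le:
  "(\<integral>x. (if enorm n x < (1 - \<epsilon>) * r then f x else 0) \<partial>lebn n) \<le> exp (- (\<epsilon>\<^sup>2 * n / 48))"
proof -
  define q where "q = 1 - \<epsilon> / 2"
  have q: "0 < q" "q \<le> 1" using eps by (auto simp: q_def)
  have "1 - \<epsilon> \<le> 1 - \<epsilon> * 3 / 5 + \<epsilon>\<^sup>2 / 20" using eps zero_le_power2[of \<epsilon>] by linarith
  hence "r * (1 - \<epsilon>) \<le> r * (1 - \<epsilon> * 3 / 5 + \<epsilon>\<^sup>2 / 20)"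
    using r_pos by (intro mult_left_mono) auto
  also have "\<dots> = q * (r * (1 - \<epsilon> / 10))" by (simp add: q_def power2_eq_square field_simps)
  also have "\<dots> \<le> q * mode" using r_le_mode q by (intro mult_left_mono) auto
  finally have q_mode: "(1 - \<epsilon>) * r \<le> q * mode" by (simp add: mult.commute)
  have "\<epsilon>\<^sup>2 / 12 \<le> (1 - q)\<^sup>2 / 2" by (simp add: q_def field_simps power2_eq_square)
  hence "real k * (\<epsilon>\<^sup>2 / 12) \<le> real k * log_excess q"
    using log_excess_ge_below[OF q] by (intro mult_left_mono) auto
  hence "q * exp (2 * D - k * log_excess q) \<le> 1 * exp (- (\<epsilon>\<^sup>2 * n / 48))"
    using exponent_bound q by (intro mult_mono) auto
  moreover have "(\<integral>x. (if enorm n x < (1 - \<epsilon>) * r then f x else 0) \<partial>lebn n)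
      \<le> (\<integral>x. (if enorm n x < q * mode then f x else 0) \<partial>lebn n)"
    using q_mode by (intro mass_mono) auto
  ultimately show ?thesis using inner_mass_le[OF q] by simp
qed

lemma deviation_mass_le:
  "(\<integral>x. (if \<epsilon> < \<bar>enorm n x / r - 1\<bar> then f x else 0) \<partial>lebn n) \<le> 5 * exp (- (\<epsilon>\<^sup>2 * n / 48))"
proof -
  let ?upper = "\<lambda>x. if (1 + \<epsilon>) * r < enorm n x then f x else 0"
  let ?lower = "\<lambda>x. if enorm n x < (1 - \<epsilon>) * r then f x else 0"
  have "(\<integral>x. (if \<epsilon> < \<bar>enorm n x / r - 1\<bar> then f x else 0) \<partial>lebn n) \<le> (\<integral>x. ?upper x + ?lower x \<partial>lebn n)"
  proof (rule integral_mono_AE)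
    show "AE x in lebn n. (if \<epsilon> < \<bar>enorm n x / r - 1\<bar> then f x else 0) \<le> ?upper x + ?lower x"
      using AE_lebn_Rn
    proof eventually_elim
      case (elim x)
      have "\<epsilon> < \<bar>enorm n x / r - 1\<bar> \<Longrightarrow> (1 + \<epsilon>) * r < enorm n x \<or> enorm n x < (1 - \<epsilon>) * r"
        using r_pos by (auto simp: abs_if field_simps split: if_splits)
      thus ?case using f_nonneg[OF elim] eps by auto
    qed
  qed (auto intro!: integrable_restrict_f)
  also have "\<dots> = (\<integral>x. ?upper x \<partial>lebn n) + (\<integral>x. ?lower x \<partial>lebn n)"
    by (intro Bochner_Integration.integral_add integrable_restrict_f) measurable
  also have "\<dots> \<le> 7 / 2 * exp (- (\<epsilon>\<^sup>2 * n / 48)) + exp (- (\<epsilon>\<^sup>2 * n / 48))"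
    by (intro add_mono upper_deviation_le lower_deviation_le)
  finally show ?thesis using exp_ge_zero[of "- (\<epsilon>\<^sup>2 * n / 48)"] by linarith
qed

end

lemma measure_density_eq_integral:
  assumes [measurable]: "f \<in> borel_measurable (lebn n)" "Measurable.pred (lebn n) P"
    and f: "integrable (lebn n) f" "\<And>x. x \<in> Rn n \<Longrightarrow> 0 \<le> f x"
  shows "measure (density (lebn n) (\<lambda>x. ennreal (f x))) {x \<in> Rn n. P x}
    = (\<integral>x. (if P x then f x else 0) \<partial>lebn n)"
proof -
  have "{x \<in> Rn n. P x} \<in> sets (lebn n)"
    using pred_Collect_borel[of P] by (simp add: space_lebn[symmetric])
  hence "emeasure (density (lebn n) (\<lambda>x. ennreal (f x))) {x \<in> Rn n. P x}
      = (\<integral>\<^sup>+x. ennreal (if P x then f x else 0) \<partial>lebn n)"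
    by (auto simp: emeasure_density space_lebn indicator_def intro!: nn_integral_cong)
  also have "\<dots> = ennreal (\<integral>x. (if P x then f x else 0) \<partial>lebn n)"
    using f by (intro nn_integral_eq_integral Bochner_Integration.integrable_bound[OF f(1)])
       (auto intro: AE_mp[OF AE_lebn_Rn])
  finally show ?thesis
    using f(2) by (simp add: measure_def integral_nonneg_AE AE_mp[OF AE_lebn_Rn])
qed

lemma deviation_integral_le:
  fixes n :: nat and f :: "(nat \<Rightarrow> real) \<Rightarrow> real" and \<delta> \<epsilon> :: real
  defines "M \<equiv> \<integral>x. (enorm n x)\<^sup>2 * f x \<partial>lebn n"
  assumes n: "40000 \<le> real n" and f: "log_concave n f" "prob_density n f" "continuous_on (Rn n) f"
    and M: "real n \<le> M" "M \<le> 2 * real n"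
    and near_radial: "\<forall>x1\<in>Rn n. \<forall>x2\<in>Rn n. enorm n x1 = enorm n x2 \<and> enorm n x1 \<le> 10 * sqrt (real n) \<longrightarrow>
           f x1 > 0 \<and> f x2 > 0 \<and> \<bar>ln (f x1) - ln (f x2)\<bar> \<le> \<delta> * real n"
    and \<delta>: "204800 * \<delta> \<le> \<epsilon>\<^sup>2" and eps: "0 < \<epsilon>" "\<epsilon> \<le> 1"
  shows "(\<integral>x. (if \<epsilon> < \<bar>enorm n x / sqrt M - 1\<bar> then f x else 0) \<partial>lebn n)
    \<le> exp 400 * exp (- (1/1000) * \<epsilon>\<^sup>2 * real n)"
proof -
  have [measurable]: "f \<in> borel_measurable (lebn n)" and integrable: "integrable (lebn n) f"
    and integral: "integral\<^sup>L (lebn n) f = 1" and nonneg: "\<And>x. x \<in> Rn n \<Longrightarrow> 0 \<le> f x"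
    using f(2) by (auto simp: prob_density_def)
  have exp_400: "(40000::real) \<le> exp 400" using square_div_4_le_exp[of 400] by simp
  show ?thesis
  proof (cases "102400 \<le> \<epsilon>\<^sup>2 * n")
    case False
    have "(\<integral>x. (if \<epsilon> < \<bar>enorm n x / sqrt M - 1\<bar> then f x else 0) \<partial>lebn n) \<le> (\<integral>x. f x \<partial>lebn n)"
      using integrable nonneg
      by (intro integral_mono_AE Bochner_Integration.integrable_bound[OF integrable])
         (auto intro: AE_mp[OF AE_lebn_Rn])
    also have "\<dots> \<le> exp (400 + (- (1/1000) * \<epsilon>\<^sup>2 * real n))"
      using False integral by simp
    finally show ?thesis by (simp add: mult_exp_exp)
  next
    case True
    have "204800 * \<delta> * n \<le> \<epsilon>\<^sup>2 * n" using \<delta> by (rule mult_right_mono) simp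
    then interpret norm_concentration n f "\<delta> * n" "10 * sqrt n" \<epsilon>
      using f M n near_radial eps True integrable integral
      by unfold_locales (auto simp: log_concave_def M_def mult.assoc)
    have "(\<integral>x. (if \<epsilon> < \<bar>enorm n x / sqrt M - 1\<bar> then f x else 0) \<partial>lebn n) \<le> 5 * exp (- (\<epsilon>\<^sup>2 * n / 48))"
      using deviation_mass_le by (simp add: r_def M2_def M_def)
    also have "\<dots> \<le> exp 400 * exp (- (1/1000) * \<epsilon>\<^sup>2 * real n)"
      using exp_400 by (intro mult_mono) auto
    finally show ?thesis .
  qed
qed

lemma norm_deviation_bound:
  fixes n :: nat and f :: "(nat \<Rightarrow> real) \<Rightarrow> real" and \<delta> \<epsilon> :: real
  defines "M \<equiv> \<integral>x. (enorm n x)\<^sup>2 * f x \<partial>lebn n"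
  assumes n: "exp 400 \<le> real n" and f: "log_concave n f" "prob_density n f" "continuous_on (Rn n) f"
    and M: "real n \<le> M" "M \<le> 2 * real n"
    and near_radial: "\<forall>x1\<in>Rn n. \<forall>x2\<in>Rn n. enorm n x1 = enorm n x2 \<and> enorm n x1 \<le> 10 * sqrt (real n) \<longrightarrow>
           f x1 > 0 \<and> f x2 > 0 \<and> \<bar>ln (f x1) - ln (f x2)\<bar> \<le> \<delta> * real n"
    and \<delta>: "0 < \<delta>" and eps: "exp 400 * sqrt \<delta> \<le> \<epsilon>" "\<epsilon> \<le> 1"
  shows "measure (density (lebn n) (\<lambda>x. ennreal (f x))) {x \<in> Rn n. \<bar>enorm n x / sqrt M - 1\<bar> > \<epsilon>}
    \<le> exp 400 * exp (- (1/1000) * \<epsilon>\<^sup>2 * real n)"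
proof -
  have exp_400: "(40000::real) \<le> exp 400" using square_div_4_le_exp[of 400] by simp
  have "0 < exp 400 * sqrt \<delta>" using \<delta> by simp
  hence "0 < \<epsilon>" using eps by linarith
  have "(exp 400)\<^sup>2 * \<delta> \<le> \<epsilon>\<^sup>2"
    using power_mono[OF eps(1), of 2] \<delta> by (simp add: power_mult_distrib)
  moreover have "204800 * \<delta> \<le> (exp 400)\<^sup>2 * \<delta>"
    using power_mono[OF exp_400, of 2] \<delta> by (intro mult_right_mono) auto
  ultimately have "204800 * \<delta> \<le> \<epsilon>\<^sup>2" by linarith
  hence "(\<integral>x. (if \<epsilon> < \<bar>enorm n x / sqrt M - 1\<bar> then f x else 0) \<partial>lebn n)
      \<le> exp 400 * exp (- (1/1000) * \<epsilon>\<^sup>2 * real n)"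
    using n exp_400 f M near_radial \<open>0 < \<epsilon>\<close> eps unfolding M_def by (intro deviation_integral_le) auto
  moreover have "measure (density (lebn n) (\<lambda>x. ennreal (f x))) {x \<in> Rn n. \<bar>enorm n x / sqrt M - 1\<bar> > \<epsilon>}
      = (\<integral>x. (if \<epsilon> < \<bar>enorm n x / sqrt M - 1\<bar> then f x else 0) \<partial>lebn n)"
    using f(2) by (intro measure_density_eq_integral) (auto simp: prob_density_def)
  ultimately show ?thesis by simp
qed

theorem lemma4p2:
  shows "\<exists>c C::real. c > 0 \<and> C > 0 \<and>
    (\<forall>(n::nat) (f::(nat \<Rightarrow> real) \<Rightarrow> real) (\<delta>::real) (\<epsilon>::real).
       real n \<ge> C \<and>
       C2_on_Rn n f \<and> log_concave n f \<and> prob_density n f \<and>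
       (\<forall>i<n. integrable (lebn n) (\<lambda>x. x i * f x) \<and>
              (\<integral>x. x i * f x \<partial>lebn n) = 0) \<and>
       real n \<le> (\<integral>x. (enorm n x)\<^sup>2 * f x \<partial>lebn n) \<and>
       (\<integral>x. (enorm n x)\<^sup>2 * f x \<partial>lebn n) \<le> 2 * real n \<and>
       \<delta> > 0 \<and>
       (\<forall>x1\<in>Rn n. \<forall>x2\<in>Rn n. enorm n x1 = enorm n x2 \<and> enorm n x1 \<le> 10 * sqrt (real n) \<longrightarrow>
           f x1 > 0 \<and> f x2 > 0 \<and> \<bar>ln (f x1) - ln (f x2)\<bar> \<le> \<delta> * real n) \<and>
       C * sqrt \<delta> \<le> \<epsilon> \<and> \<epsilon> \<le> 1
       \<longrightarrow>
       (let r = sqrt (\<integral>x. (enorm n x)\<^sup>2 * f x \<partial>lebn n) in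
         measure (density (lebn n) (\<lambda>x. ennreal (f x)))
           {x \<in> Rn n. \<bar>enorm n x / r - 1\<bar> > \<epsilon>}
         \<le> C * exp (- c * \<epsilon>\<^sup>2 * real n)))"
proof (rule exI[of _ "1/1000"], rule exI[of _ "exp 400"], intro conjI allI impI)
qed (use norm_deviation_bound in \<open>auto simp: Let_def C2_on_Rn_def\<close>)

end
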